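(* Let $Q$ be a finite quiver, $A=\Bbbk Q/(\geq 2)$, $J$ the ideal of $A$ generated by the loops, $B=A/J$. For each vertex $i$ let $\tilde P_i=Be_i$, let $\tilde I_i$ be the indecomposable injective $B$-module at $i$, and let $S_i$ be the simple module at $i$; regard these as $A$-modules. Then: (1) If $i\neq j$ and $\{\tilde P_i,\tilde P_j\}$ is a brick set in $A$-mod, then $\mathrm{Ext}^1_A(\tilde P_i,\tilde P_j)=0$; and if $\tilde P_i\not\cong S_i$ then $\mathrm{Ext}^1_A(\tilde P_i,\tilde P_i)=0$. (2) If $i\neq j$ and $\{\tilde I_i,\tilde I_j\}$ is a brick set in $A$-mod, then $\mathrm{Ext}^1_A(\tilde I_i,\tilde I_j)=0$; and if $\tilde I_i\not\cong S_i$ then $\mathrm{Ext}^1_A(\tilde I_i,\tilde I_i)=0$. (3) If $i\neq j$ then $\mathrm{Ext}^1_A(\tilde P_i,S_j)=0$. (4) If $i\neq j$ then $\mathrm{Ext}^1_A(S_i,\tilde I_j)=0$.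
   Context: $\Bbbk$ is an algebraically closed field; $\Bbbk Q$ is the path algebra with $e_i\alpha=\delta_{i,t(\alpha)}\alpha$, $\alpha e_j=\delta_{j,s(\alpha)}\alpha$; $(\geq 2)$ is the ideal generated by paths of length $\geq 2$; modules are finite-dimensional left modules, and a $B$-module is regarded as an $A$-module via $A\to B=A/J$. The indecomposable injective $B$-module at $i$ is $\tilde I_i=\mathrm{Hom}_\Bbbk(e_iB,\Bbbk)$. A brick is a module $M$ with $\mathrm{End}(M)=\Bbbk$; a set $\{X_1,\dots,X_k\}$ of nonzero modules is a brick set if each is a brick and $\dim\mathrm{Hom}(X_a,X_b)=\delta_{ab}$. *)

theory Defs
  imports "HOL-Computational_Algebra.Polynomial" "Jordan_Normal_Form.Matrix"
begin

record quiver =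
  nv  :: nat
  na  :: nat
  src :: "nat \<Rightarrow> nat"
  tgt :: "nat \<Rightarrow> nat"

definition quiver_wf :: "quiver \<Rightarrow> bool" where
  "quiver_wf Q \<longleftrightarrow> (\<forall>a < na Q. src Q a < nv Q \<and> tgt Q a < nv Q)"

definition is_loop :: "quiver \<Rightarrow> nat \<Rightarrow> bool" where
  "is_loop Q a \<longleftrightarrow> src Q a = tgt Q a"

text \<open>Basis elements of A: trivial paths e_v and arrows.\<close>
datatype pbasis = Vtx nat | Arr nat

definition basisA :: "quiver \<Rightarrow> pbasis list" where
  "basisA Q = map Vtx [0..<nv Q] @ map Arr [0..<na Q]"

text \<open>Product of basis elements in A (None means the product is 0).
  Conventions: e_i a = [i = t(a)] a,  a e_j = [j = s(a)] a, paths of length 2 vanish.\<close>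
fun mulA :: "quiver \<Rightarrow> pbasis \<Rightarrow> pbasis \<Rightarrow> pbasis option" where
  "mulA Q (Vtx i) (Vtx j) = (if i = j then Some (Vtx i) else None)"
| "mulA Q (Vtx i) (Arr a) = (if i = tgt Q a then Some (Arr a) else None)"
| "mulA Q (Arr a) (Vtx j) = (if j = src Q a then Some (Arr a) else None)"
| "mulA Q (Arr a) (Arr b) = None"

text \<open>B = A/J, J generated by the loops: basis = vertices and non-loop arrows.
  mulB is the multiplication of B pulled back along A \<rightarrow> B (loops map to 0).\<close>
definition basisB :: "quiver \<Rightarrow> pbasis list" where
  "basisB Q = map Vtx [0..<nv Q] @ map Arr (filter (\<lambda>a. \<not> is_loop Q a) [0..<na Q])"

fun loop_elt :: "quiver \<Rightarrow> pbasis \<Rightarrow> bool" where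
  "loop_elt Q (Vtx i) = False"
| "loop_elt Q (Arr a) = is_loop Q a"

definition mulB :: "quiver \<Rightarrow> pbasis \<Rightarrow> pbasis \<Rightarrow> pbasis option" where
  "mulB Q b c = (if loop_elt Q b \<or> loop_elt Q c then None else mulA Q b c)"

text \<open>A module of dimension n over A is given by matrices (the action of each
  basis element of A) satisfying the multiplication table and unitality.\<close>
type_synonym 'k amod = "nat \<times> (pbasis \<Rightarrow> 'k mat)"

definition sum_mats :: "nat \<Rightarrow> 'k::field mat list \<Rightarrow> 'k mat" where
  "sum_mats n Ms = foldr (+) Ms (0\<^sub>m n n)"

definition is_Amod :: "quiver \<Rightarrow> 'k::field amod \<Rightarrow> bool" where
  "is_Amod Q M \<longleftrightarrow>
     (\<forall>b \<in> set (basisA Q). snd M b \<in> carrier_mat (fst M) (fst M)) \<and>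
     (\<forall>b \<in> set (basisA Q). \<forall>c \<in> set (basisA Q).
        snd M b * snd M c = (case mulA Q b c of None \<Rightarrow> 0\<^sub>m (fst M) (fst M) | Some d \<Rightarrow> snd M d)) \<and>
     sum_mats (fst M) (map (\<lambda>v. snd M (Vtx v)) [0..<nv Q]) = 1\<^sub>m (fst M)"

definition is_hom :: "quiver \<Rightarrow> 'k::field amod \<Rightarrow> 'k amod \<Rightarrow> 'k mat \<Rightarrow> bool" where
  "is_hom Q M N f \<longleftrightarrow> f \<in> carrier_mat (fst N) (fst M) \<and>
     (\<forall>b \<in> set (basisA Q). f * snd M b = snd N b * f)"

definition mod_iso :: "quiver \<Rightarrow> 'k::field amod \<Rightarrow> 'k amod \<Rightarrow> bool" where
  "mod_iso Q M N \<longleftrightarrow> (\<exists>f g. is_hom Q M N f \<and> is_hom Q N M g \<and>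
     g * f = 1\<^sub>m (fst M) \<and> f * g = 1\<^sub>m (fst N))"

definition is_brick :: "quiver \<Rightarrow> 'k::field amod \<Rightarrow> bool" where
  "is_brick Q M \<longleftrightarrow> fst M > 0 \<and> (\<forall>f. is_hom Q M M f \<longrightarrow> (\<exists>c. f = c \<cdot>\<^sub>m 1\<^sub>m (fst M)))"

definition brick_pair :: "quiver \<Rightarrow> 'k::field amod \<Rightarrow> 'k amod \<Rightarrow> bool" where
  "brick_pair Q X Y \<longleftrightarrow> is_brick Q X \<and> is_brick Q Y \<and>
     (\<forall>f. is_hom Q X Y f \<longrightarrow> f = 0\<^sub>m (fst Y) (fst X)) \<and>
     (\<forall>f. is_hom Q Y X f \<longrightarrow> f = 0\<^sub>m (fst X) (fst Y))"

definition short_exact :: "quiver \<Rightarrow> 'k::field amod \<Rightarrow> 'k amod \<Rightarrow> 'k amod \<Rightarrow> 'k mat \<Rightarrow> 'k mat \<Rightarrow> bool" where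
  "short_exact Q N E M f g \<longleftrightarrow> is_hom Q N E f \<and> is_hom Q E M g \<and>
     (\<forall>v \<in> carrier_vec (fst N). f *\<^sub>v v = 0\<^sub>v (fst E) \<longrightarrow> v = 0\<^sub>v (fst N)) \<and>
     (\<forall>w \<in> carrier_vec (fst M). \<exists>v \<in> carrier_vec (fst E). g *\<^sub>v v = w) \<and>
     g * f = 0\<^sub>m (fst M) (fst N) \<and>
     (\<forall>v \<in> carrier_vec (fst E). g *\<^sub>v v = 0\<^sub>v (fst M) \<longrightarrow> (\<exists>u \<in> carrier_vec (fst N). v = f *\<^sub>v u))"

text \<open>Ext^1_A(M,N) = 0 (Yoneda description): every extension of M by N in A-mod splits.\<close>
definition Ext1_zero :: "quiver \<Rightarrow> 'k::field amod \<Rightarrow> 'k amod \<Rightarrow> bool" where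
  "Ext1_zero Q M N \<longleftrightarrow>
     (\<forall>E f g. is_Amod Q E \<and> short_exact Q N E M f g \<longrightarrow>
        (\<exists>s. is_hom Q M E s \<and> g * s = 1\<^sub>m (fst M)))"

definition simple_mod :: "quiver \<Rightarrow> nat \<Rightarrow> 'k::field amod" where
  "simple_mod Q i = (1, \<lambda>b. case b of Vtx v \<Rightarrow> (if v = i then 1\<^sub>m 1 else 0\<^sub>m 1 1)
                                     | Arr a \<Rightarrow> 0\<^sub>m 1 1)"

definition Pbasis :: "quiver \<Rightarrow> nat \<Rightarrow> pbasis list" where
  "Pbasis Q i = filter (\<lambda>c. mulB Q c (Vtx i) = Some c) (basisB Q)"

text \<open>B e_i with the left multiplication action of A (through A \<rightarrow> B).\<close>
definition Ptil :: "quiver \<Rightarrow> nat \<Rightarrow> 'k::field amod" where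
  "Ptil Q i = (let L = Pbasis Q i; n = length L in
     (n, \<lambda>b. mat n n (\<lambda>(r, c). if mulB Q b (L ! c) = Some (L ! r) then 1 else 0)))"

definition Ibasis :: "quiver \<Rightarrow> nat \<Rightarrow> pbasis list" where
  "Ibasis Q i = filter (\<lambda>c. mulB Q (Vtx i) c = Some c) (basisB Q)"

text \<open>Hom_k(e_i B, k) in the dual basis, with (a f)(x) = f(x a).\<close>
definition Itil :: "quiver \<Rightarrow> nat \<Rightarrow> 'k::field amod" where
  "Itil Q i = (let R = Ibasis Q i; n = length R in
     (n, \<lambda>b. mat n n (\<lambda>(r, c). if mulB Q (R ! r) b = Some (R ! c) then 1 else 0)))"

end

theory Submission
  imports Defs
begin

text \<open>
  Since A e_i is projective and P~_i = A e_i / (loops at i), an extension of P~_i by N splits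
  as soon as some lift of e_i is killed by the loops at i. A loop maps any lift of e_i into the
  image of N, onto a vector at i killed by all arrows, i.e. the image of a map S_i \<rightarrow> N; so
  Ext^1(P~_i, N) = 0 whenever Hom(S_i, N) = 0. For N = P~_j this follows from the brick
  condition (an arrow j \<rightarrow> i would give a nonzero map P~_i \<rightarrow> P~_j), for N = P~_i from
  P~_i not being simple (some arrow leaves i), and for N = S_j from i \<noteq> j.

  Dually, the socle of I~_j is S_j, so the elements of an extension of M by I~_j that map to 0
  in M and are killed by all arrows come from S_j. This lets one correct lifts of the basis
  vectors of a quotient M of I~_i sitting at vertices other than j until the arrows act on
  them as on M, which works whenever Hom(M, S_j) = 0; the hypotheses of (2) and (4) give this.
\<close>

definition out_arrows :: "quiver \<Rightarrow> nat \<Rightarrow> nat list" where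
  "out_arrows Q i = filter (\<lambda>a. \<not> is_loop Q a \<and> src Q a = i) [0..<na Q]"

definition in_arrows :: "quiver \<Rightarrow> nat \<Rightarrow> nat list" where
  "in_arrows Q i = filter (\<lambda>a. \<not> is_loop Q a \<and> tgt Q a = i) [0..<na Q]"

lemma set_out_arrows [simp]:
  "a \<in> set (out_arrows Q i) \<longleftrightarrow> a < na Q \<and> \<not> is_loop Q a \<and> src Q a = i"
  by (auto simp: out_arrows_def)

lemma set_in_arrows [simp]:
  "a \<in> set (in_arrows Q i) \<longleftrightarrow> a < na Q \<and> \<not> is_loop Q a \<and> tgt Q a = i"
  by (auto simp: in_arrows_def)

lemma distinct_in_arrows: "distinct (in_arrows Q i)"
  by (simp add: in_arrows_def)

lemma mulB_simps [simp]:
  "mulB Q (Vtx v) (Vtx w) = (if v = w then Some (Vtx v) else None)"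
  "mulB Q (Vtx v) (Arr a) = (if \<not> is_loop Q a \<and> v = tgt Q a then Some (Arr a) else None)"
  "mulB Q (Arr a) (Vtx w) = (if \<not> is_loop Q a \<and> w = src Q a then Some (Arr a) else None)"
  "mulB Q (Arr a) (Arr b) = None"
  by (auto simp: mulB_def)

lemma mulB_eq_Some_Vtx: "mulB Q x y = Some (Vtx i) \<longleftrightarrow> x = Vtx i \<and> y = Vtx i"
  by (cases x; cases y) (auto split: if_splits)

lemma mulB_eq_Some_Arr: "mulB Q x y = Some (Arr a) \<longleftrightarrow> \<not> is_loop Q a \<and>
    ((x = Vtx (tgt Q a) \<and> y = Arr a) \<or> (x = Arr a \<and> y = Vtx (src Q a)))"
  by (cases x; cases y) (auto split: if_splits)

lemma basisA_mem [simp]: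
  "Vtx v \<in> set (basisA Q) \<longleftrightarrow> v < nv Q"
  "Arr a \<in> set (basisA Q) \<longleftrightarrow> a < na Q"
  by (auto simp: basisA_def)

lemma basisB_subset_basisA: "set (basisB Q) \<subseteq> set (basisA Q)"
  by (auto simp: basisB_def basisA_def)

lemma basisB_not_loop: "x \<in> set (basisB Q) \<Longrightarrow> \<not> loop_elt Q x"
  by (auto simp: basisB_def)

lemma filter_eq_upt: "i < n \<Longrightarrow> filter (\<lambda>v. v = i) [0..<n] = [i]"
  by (induction n) auto

lemma Pbasis_eq: "i < nv Q \<Longrightarrow> Pbasis Q i = Vtx i # map Arr (out_arrows Q i)"
  by (simp add: Pbasis_def basisB_def out_arrows_def filter_map comp_def
      filter_eq_upt conj_commute eq_commute[of i])

lemma distinct_Pbasis: "distinct (Pbasis Q i)"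
  by (auto simp: Pbasis_def basisB_def distinct_map inj_on_def)

lemma Pbasis_subset_basisA: "set (Pbasis Q i) \<subseteq> set (basisA Q)"
  using basisB_subset_basisA by (auto simp: Pbasis_def)

lemma Pbasis_mulB_Vtx: "x \<in> set (Pbasis Q i) \<Longrightarrow> mulB Q x (Vtx i) = Some x"
  by (simp add: Pbasis_def)

lemma set_Pbasis: "i < nv Q \<Longrightarrow> set (Pbasis Q i) = insert (Vtx i) (Arr ` set (out_arrows Q i))"
  by (simp add: Pbasis_eq)

lemma Pbasis_mulB_closed:
  assumes "i < nv Q" "b \<in> set (basisA Q)" "x \<in> set (Pbasis Q i)" "mulB Q b x = Some d"
  shows "d \<in> set (Pbasis Q i)"
proof -
  have "x = Vtx i \<or> (\<exists>a \<in> set (out_arrows Q i). x = Arr a)" using assms(3) set_Pbasis[OF assms(1)] by auto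
  then show ?thesis using assms(2,4) unfolding set_Pbasis[OF assms(1)] by (cases b) (auto split: if_splits)
qed

lemma distinct_Ibasis: "distinct (Ibasis Q i)"
  by (auto simp: Ibasis_def basisB_def distinct_map inj_on_def)

lemma Ibasis_eq: "i < nv Q \<Longrightarrow> Ibasis Q i = Vtx i # map Arr (in_arrows Q i)"
  by (simp add: Ibasis_def basisB_def in_arrows_def filter_map comp_def
      filter_eq_upt conj_commute eq_commute[of i])

lemma distinct_Vtx_Arr: "distinct as \<Longrightarrow> distinct (Vtx i # map Arr as)"
  by (auto simp: distinct_map inj_on_def)

lemma nth_Vtx_Arr_eq_Vtx_iff:
  "r < Suc (length as) \<Longrightarrow> (Vtx i # map Arr as) ! r = Vtx w \<longleftrightarrow> r = 0 \<and> w = i"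
  by (cases r) auto

lemma nth_Vtx_Arr_cases:
  assumes "r < Suc (length as)"
  obtains "r = 0" | a where "a \<in> set as" "0 < r" "(Vtx i # map Arr as) ! r = Arr a"
proof (cases r)
  case (Suc k)
  then show thesis using assms by (intro that(2)[of "as ! k"]) auto
qed (rule that(1))

lemma nth_Vtx_Arr_index:
  assumes "a \<in> set as"
  obtains k where "0 < k" "k < Suc (length as)" "(Vtx i # map Arr as) ! k = Arr a"
proof -
  obtain r where "r < length as" "as ! r = a" using assms by (auto simp: in_set_conv_nth)
  then show thesis by (intro that[of "Suc r"]) auto
qed

lemma zero_mat_mult_vec [simp]:
  "v \<in> carrier_vec m \<Longrightarrow> 0\<^sub>m n m *\<^sub>v v = (0\<^sub>v n :: 'a::semiring_0 vec)"
  by (intro eq_vecI) (auto simp: scalar_prod_def)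

lemma mat_mult_zero_vec [simp]:
  "A \<in> carrier_mat n m \<Longrightarrow> A *\<^sub>v 0\<^sub>v m = (0\<^sub>v n :: 'a::semiring_0 vec)"
  by (intro eq_vecI) auto

lemma mat_mult_unit_vec:
  "A \<in> carrier_mat n m \<Longrightarrow> k < m \<Longrightarrow> A *\<^sub>v unit_vec m k = col (A :: 'a::semiring_1 mat) k"
  by (intro eq_vecI) auto

lemma indicator_vec_eq_unit_vec:
  assumes "k < m" "\<And>r. r < m \<Longrightarrow> P r \<longleftrightarrow> r = k"
  shows "vec m (\<lambda>r. if P r then 1 else 0) = (unit_vec m k :: 'a::zero_neq_one vec)"
  using assms by (intro eq_vecI) auto

lemma indicator_vec_eq_zero:
  assumes "\<And>r. r < m \<Longrightarrow> \<not> P r"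
  shows "vec m (\<lambda>r. if P r then 1 else 0) = (0\<^sub>v m :: 'a::zero_neq_one vec)"
  using assms by (intro eq_vecI) auto

lemma indicator_mat_mult_vec_index:
  assumes "u \<in> carrier_vec n" "r < m"
  shows "(mat m n (\<lambda>(r, c). if P r c then 1 else 0) *\<^sub>v u) $ r
    = (\<Sum>c<n. if P r c then u $ c else (0::'a::semiring_1))"
proof -
  have "(mat m n (\<lambda>(r, c). if P r c then 1 else 0) *\<^sub>v u) $ r
      = (\<Sum>c\<in>{0..<n}. (if P r c then 1 else 0) * u $ c)"
    using assms by (simp add: scalar_prod_def)
  also have "\<dots> = (\<Sum>c<n. if P r c then u $ c else 0)"
    by (rule sum.cong) auto
  finally show ?thesis .
qed

lemma sum_if_unique:
  assumes "(k::nat) < n" "\<And>c. c < n \<Longrightarrow> P c \<longleftrightarrow> c = k"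
  shows "(\<Sum>c<n. if P c then f c else (0::'a::comm_monoid_add)) = f k"
proof -
  have "(\<Sum>c<n. if P c then f c else 0) = (\<Sum>c<n. if c = k then f c else 0)"
    by (rule sum.cong) (use assms in auto)
  also have "\<dots> = f k" using assms(1) by (subst sum.delta) auto
  finally show ?thesis .
qed

lemma sum_if_never:
  "(\<And>c::nat. c < n \<Longrightarrow> \<not> P c) \<Longrightarrow> (\<Sum>c<n. if P c then f c else (0::'a::comm_monoid_add)) = 0"
  by (rule sum.neutral) auto

lemma minus_minus_vec:
  "a \<in> carrier_vec n \<Longrightarrow> t \<in> carrier_vec n \<Longrightarrow> a - (a - t) = (t :: 'a::ab_group_add vec)"
  by (intro eq_vecI) auto

lemma minus_vec_eq_zero_iff:
  "a \<in> carrier_vec n \<Longrightarrow> t \<in> carrier_vec n \<Longrightarrow> a - t = 0\<^sub>v n \<longleftrightarrow> a = (t :: 'a::ab_group_add vec)"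
  by (auto simp: vec_eq_iff)

lemma fst_Ptil [simp]: "fst (Ptil Q i) = length (Pbasis Q i)"
  and snd_Ptil: "snd (Ptil Q i) b = mat (length (Pbasis Q i)) (length (Pbasis Q i))
     (\<lambda>(r, c). if mulB Q b (Pbasis Q i ! c) = Some (Pbasis Q i ! r) then 1 else 0)"
  by (simp_all add: Ptil_def Let_def)

lemma Ptil_col_unit:
  assumes "r < length (Pbasis Q i)" "c < length (Pbasis Q i)"
    and "mulB Q b (Pbasis Q i ! c) = Some (Pbasis Q i ! r)"
  shows "col (snd (Ptil Q i) b) c = unit_vec (length (Pbasis Q i)) r"
  unfolding snd_Ptil using assms
  by (auto intro!: indicator_vec_eq_unit_vec simp: nth_eq_iff_index_eq[OF distinct_Pbasis])

lemma Ptil_col_zero: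
  assumes "c < length (Pbasis Q i)" "mulB Q b (Pbasis Q i ! c) = None"
  shows "col (snd (Ptil Q i) b) c = 0\<^sub>v (length (Pbasis Q i))"
  unfolding snd_Ptil using assms by (auto intro!: indicator_vec_eq_zero)

lemma Ptil_carrier: "snd (Ptil Q i) b \<in> carrier_mat (fst (Ptil Q i)) (fst (Ptil Q i))"
  by (simp add: snd_Ptil)

text \<open>The dual of the span of R: for R = Ibasis Q i this is I~_i, and for R a sublist of it
  containing Vtx i it is a quotient of I~_i.\<close>
definition dual_mod :: "quiver \<Rightarrow> pbasis list \<Rightarrow> 'k::field amod" where
  "dual_mod Q R = (length R, \<lambda>b. mat (length R) (length R)
     (\<lambda>(r, c). if mulB Q (R ! r) b = Some (R ! c) then 1 else 0))"

lemma fst_dual_mod [simp]: "fst (dual_mod Q R) = length R"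
  and snd_dual_mod: "snd (dual_mod Q R) b = mat (length R) (length R)
     (\<lambda>(r, c). if mulB Q (R ! r) b = Some (R ! c) then 1 else 0)"
  by (simp_all add: dual_mod_def)

lemma dual_mod_carrier: "snd (dual_mod Q R) b \<in> carrier_mat (fst (dual_mod Q R)) (fst (dual_mod Q R))"
  by (simp add: snd_dual_mod)

lemma Itil_dual_mod: "Itil Q i = dual_mod Q (Ibasis Q i)"
  by (simp add: Itil_def dual_mod_def Let_def)

lemma fst_Itil [simp]: "fst (Itil Q i) = length (Ibasis Q i)"
  by (simp add: Itil_dual_mod)

lemma Itil_index:
  "r < length (Ibasis Q i) \<Longrightarrow> c < length (Ibasis Q i) \<Longrightarrow> snd (Itil Q i) b $$ (r, c)
    = (if mulB Q (Ibasis Q i ! r) b = Some (Ibasis Q i ! c) then 1 else 0)"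
  by (simp add: Itil_dual_mod snd_dual_mod)

lemma Itil_carrier: "snd (Itil Q i) b \<in> carrier_mat (fst (Itil Q i)) (fst (Itil Q i))"
  by (simp add: Itil_dual_mod snd_dual_mod)

lemma simple_mod_dual_mod: "simple_mod Q i = dual_mod Q [Vtx i]"
  by (auto simp: simple_mod_def dual_mod_def split: pbasis.split intro!: eq_matI)

lemma simple_mod_carrier: "snd (simple_mod Q i) b \<in> carrier_mat (fst (simple_mod Q i)) (fst (simple_mod Q i))"
  using dual_mod_carrier[of Q "[Vtx i]" b] by (simp only: simple_mod_dual_mod)

lemma dual_mod_mult_vec_index:
  "u \<in> carrier_vec (length R) \<Longrightarrow> r < length R \<Longrightarrow> (snd (dual_mod Q R) b *\<^sub>v u) $ r
    = (\<Sum>c<length R. if mulB Q (R ! r) b = Some (R ! c) then u $ c else 0)"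
  unfolding snd_dual_mod by (rule indicator_mat_mult_vec_index)

lemma col_dual_mod:
  "c < length R \<Longrightarrow> col (snd (dual_mod Q R) b) c
    = vec (length R) (\<lambda>r. if mulB Q (R ! r) b = Some (R ! c) then 1 else 0)"
  by (simp add: snd_dual_mod)

lemma hom_mult_vec:
  assumes h: "is_hom Q X Y h" and b: "b \<in> set (basisA Q)"
    and X: "snd X b \<in> carrier_mat (fst X) (fst X)" and Y: "snd Y b \<in> carrier_mat (fst Y) (fst Y)"
    and u: "u \<in> carrier_vec (fst X)"
  shows "h *\<^sub>v (snd X b *\<^sub>v u) = snd Y b *\<^sub>v (h *\<^sub>v u)"
proof -
  have "h \<in> carrier_mat (fst Y) (fst X)" and "h * snd X b = snd Y b * h"
    using h b by (auto simp: is_hom_def)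
  then show ?thesis using X Y u by (metis assoc_mult_mat_vec)
qed

locale extension =
  fixes Q :: quiver and N E M :: "'k::field amod" and f g :: "'k mat"
  assumes wf: "quiver_wf Q"
    and E_Amod: "is_Amod Q E"
    and exact: "short_exact Q N E M f g"
    and N_carrier: "\<And>b. snd N b \<in> carrier_mat (fst N) (fst N)"
    and M_carrier: "\<And>b. snd M b \<in> carrier_mat (fst M) (fst M)"
begin

lemma f_hom: "is_hom Q N E f" and g_hom: "is_hom Q E M g"
  using exact by (simp_all add: short_exact_def)

lemma f_carrier: "f \<in> carrier_mat (fst E) (fst N)" and g_carrier: "g \<in> carrier_mat (fst M) (fst E)"
  using f_hom g_hom by (simp_all add: is_hom_def)

lemma E_carrier: "b \<in> set (basisA Q) \<Longrightarrow> snd E b \<in> carrier_mat (fst E) (fst E)"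
  using E_Amod by (simp add: is_Amod_def)

lemma E_mult_vec_carrier [simp]:
  "b \<in> set (basisA Q) \<Longrightarrow> x \<in> carrier_vec (fst E) \<Longrightarrow> snd E b *\<^sub>v x \<in> carrier_vec (fst E)"
  using E_carrier mult_mat_vec_carrier by blast

lemma E_mult_vec_mult_vec:
  assumes b: "b \<in> set (basisA Q)" and c: "c \<in> set (basisA Q)" and x: "x \<in> carrier_vec (fst E)"
  shows "snd E b *\<^sub>v (snd E c *\<^sub>v x) =
    (case mulA Q b c of None \<Rightarrow> 0\<^sub>v (fst E) | Some d \<Rightarrow> snd E d *\<^sub>v x)"
proof -
  have "snd E b *\<^sub>v (snd E c *\<^sub>v x) = (snd E b * snd E c) *\<^sub>v x"
    using E_carrier[OF b] E_carrier[OF c] x by simp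
  also have "snd E b * snd E c = (case mulA Q b c of None \<Rightarrow> 0\<^sub>m (fst E) (fst E) | Some d \<Rightarrow> snd E d)"
    using E_Amod b c by (auto simp: is_Amod_def)
  finally show ?thesis using x by (auto split: option.splits)
qed

lemma g_mult_vec:
  "b \<in> set (basisA Q) \<Longrightarrow> x \<in> carrier_vec (fst E) \<Longrightarrow> g *\<^sub>v (snd E b *\<^sub>v x) = snd M b *\<^sub>v (g *\<^sub>v x)"
  using hom_mult_vec[OF g_hom] E_carrier M_carrier by blast

lemma f_mult_vec:
  "b \<in> set (basisA Q) \<Longrightarrow> u \<in> carrier_vec (fst N) \<Longrightarrow> f *\<^sub>v (snd N b *\<^sub>v u) = snd E b *\<^sub>v (f *\<^sub>v u)"
  using hom_mult_vec[OF f_hom] E_carrier N_carrier by blast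

lemma f_inj:
  assumes u: "u \<in> carrier_vec (fst N)" and u': "u' \<in> carrier_vec (fst N)" and eq: "f *\<^sub>v u = f *\<^sub>v u'"
  shows "u = u'"
proof -
  have "f *\<^sub>v (u - u') = 0\<^sub>v (fst E)"
    using f_carrier u u' eq by (simp add: mult_minus_distrib_mat_vec)
  then have "u - u' = 0\<^sub>v (fst N)" using exact u u' by (simp add: short_exact_def)
  then show ?thesis using minus_vec_eq_zero_iff u u' by blast
qed

lemma g_f_mult_vec: "u \<in> carrier_vec (fst N) \<Longrightarrow> g *\<^sub>v (f *\<^sub>v u) = 0\<^sub>v (fst M)"
  using exact f_carrier g_carrier by (simp add: short_exact_def flip: assoc_mult_mat_vec)

lemma ker_g:
  "x \<in> carrier_vec (fst E) \<Longrightarrow> g *\<^sub>v x = 0\<^sub>v (fst M) \<Longrightarrow> \<exists>u \<in> carrier_vec (fst N). x = f *\<^sub>v u"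
  using exact by (simp add: short_exact_def)

lemma g_surj: "y \<in> carrier_vec (fst M) \<Longrightarrow> \<exists>x \<in> carrier_vec (fst E). g *\<^sub>v x = y"
  using exact by (simp add: short_exact_def)

lemma g_unit_vec:
  "b \<in> set (basisA Q) \<Longrightarrow> x \<in> carrier_vec (fst E) \<Longrightarrow> c < fst M \<Longrightarrow> g *\<^sub>v x = unit_vec (fst M) c
    \<Longrightarrow> g *\<^sub>v (snd E b *\<^sub>v x) = col (snd M b) c"
  using g_mult_vec mat_mult_unit_vec[OF M_carrier] by simp

text \<open>A lift of the standard basis of M on which A acts through the columns of the
  matrices of M spans a copy of M complementing the image of f.\<close>
lemma section_of_lifts:
  assumes w: "\<And>c. c < fst M \<Longrightarrow> w c \<in> carrier_vec (fst E)"
    and g_w: "\<And>c. c < fst M \<Longrightarrow> g *\<^sub>v w c = unit_vec (fst M) c"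
    and act: "\<And>b c. b \<in> set (basisA Q) \<Longrightarrow> c < fst M \<Longrightarrow>
      (\<exists>r<fst M. col (snd M b) c = unit_vec (fst M) r \<and> snd E b *\<^sub>v w c = w r) \<or>
      (col (snd M b) c = 0\<^sub>v (fst M) \<and> snd E b *\<^sub>v w c = 0\<^sub>v (fst E))"
  shows "\<exists>s. is_hom Q M E s \<and> g * s = 1\<^sub>m (fst M)"
proof -
  define s where "s = mat (fst E) (fst M) (\<lambda>(p, q). w q $ p)"
  have sc: "s \<in> carrier_mat (fst E) (fst M)" unfolding s_def by simp
  have col_s: "col s q = w q" if "q < fst M" for q
    unfolding s_def using that w[OF that] by (intro eq_vecI) auto
  have "s * snd M b = snd E b * s" if b: "b \<in> set (basisA Q)" for b
  proof (rule mat_col_eqI)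
    fix q assume "q < dim_col (snd E b * s)"
    then have q: "q < fst M" using sc by simp
    have l: "col (s * snd M b) q = s *\<^sub>v col (snd M b) q" using sc M_carrier[of b] q by simp
    have r: "col (snd E b * s) q = snd E b *\<^sub>v w q" using sc E_carrier[OF b] q col_s[OF q] by simp
    from act[OF b q] show "col (s * snd M b) q = col (snd E b * s) q"
    proof
      assume "\<exists>r<fst M. col (snd M b) q = unit_vec (fst M) r \<and> snd E b *\<^sub>v w q = w r"
      then obtain r where "r < fst M" "col (snd M b) q = unit_vec (fst M) r" "snd E b *\<^sub>v w q = w r"
        by blast
      then show ?thesis using l r mat_mult_unit_vec[OF sc] col_s by simp
    qed (use l r sc in simp)
  qed (use sc E_carrier[OF that] M_carrier[of b] in simp_all)
  moreover have "g * s = 1\<^sub>m (fst M)"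
    by (rule mat_col_eqI) (use g_carrier sc col_s g_w in simp_all)
  ultimately show ?thesis using sc by (auto simp: is_hom_def)
qed

end

lemma Ext1_zeroI:
  assumes "quiver_wf Q" "\<And>b. snd N b \<in> carrier_mat (fst N) (fst N)"
    and "\<And>b. snd M b \<in> carrier_mat (fst M) (fst M)"
    and "\<And>E f g. extension Q N E M f g \<Longrightarrow> \<exists>s. is_hom Q M E s \<and> g * s = 1\<^sub>m (fst M)"
  shows "Ext1_zero Q M N"
  unfolding Ext1_zero_def
proof (intro allI impI)
  fix E f g assume "is_Amod Q E \<and> short_exact Q N E M f g"
  then show "\<exists>s. is_hom Q M E s \<and> g * s = 1\<^sub>m (fst M)"
    using assms(1-3) by (intro assms(4)[of E f]) (simp add: extension_def)
qed

subsection \<open>Extensions of P~_i\<close>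

text \<open>Hom(S_i, N) = 0: the images of 1 under maps S_i \<rightarrow> N are the vectors at i killed by all arrows.\<close>
definition hom_from_simple_zero :: "quiver \<Rightarrow> nat \<Rightarrow> 'k::field amod \<Rightarrow> bool" where
  "hom_from_simple_zero Q i N \<longleftrightarrow> (\<forall>u \<in> carrier_vec (fst N).
     snd N (Vtx i) *\<^sub>v u = u \<and> (\<forall>a < na Q. snd N (Arr a) *\<^sub>v u = 0\<^sub>v (fst N)) \<longrightarrow> u = 0\<^sub>v (fst N))"

context extension
begin

lemma Ptil_section_of_generator:
  assumes M: "M = Ptil Q i" and i: "i < nv Q"
    and v: "v \<in> carrier_vec (fst E)" "g *\<^sub>v v = unit_vec (fst M) 0"
    and rel: "\<And>b x. b \<in> set (basisA Q) \<Longrightarrow> x \<in> set (Pbasis Q i) \<Longrightarrow>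
      snd E b *\<^sub>v (snd E x *\<^sub>v v) = (case mulB Q b x of None \<Rightarrow> 0\<^sub>v (fst E) | Some d \<Rightarrow> snd E d *\<^sub>v v)"
  shows "\<exists>s. is_hom Q M E s \<and> g * s = 1\<^sub>m (fst M)"
proof -
  define L where "L = Pbasis Q i"
  have M_dim: "fst M = length L" unfolding M L_def by simp
  have L0: "L ! 0 = Vtx i" and L_pos: "0 < length L" unfolding L_def using Pbasis_eq[OF i] by simp_all
  have L_Pbasis: "L ! c \<in> set (Pbasis Q i)" if "c < length L" for c
    using that nth_mem unfolding L_def by blast
  have L_basisA: "L ! c \<in> set (basisA Q)" if "c < length L" for c
    using L_Pbasis[OF that] Pbasis_subset_basisA by blast
  show ?thesis
  proof (rule section_of_lifts[of "\<lambda>c. snd E (L ! c) *\<^sub>v v"])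
    show "snd E (L ! c) *\<^sub>v v \<in> carrier_vec (fst E)" if "c < fst M" for c
      using L_basisA that v M_dim by simp
    show "g *\<^sub>v (snd E (L ! c) *\<^sub>v v) = unit_vec (fst M) c" if "c < fst M" for c
    proof -
      have c: "c < length L" using that M_dim by simp
      have mul: "mulB Q (L ! c) (L ! 0) = Some (L ! c)" using L0 Pbasis_mulB_Vtx L_Pbasis[OF c] by simp
      have col: "col (snd M (L ! c)) 0 = unit_vec (fst M) c"
        unfolding M_dim unfolding M L_def by (rule Ptil_col_unit) (use c L_pos mul in \<open>simp_all add: L_def\<close>)
      then show ?thesis using g_unit_vec[OF L_basisA[OF c] v(1) _ v(2)] L_pos M_dim by simp
    qed
    show "(\<exists>r<fst M. col (snd M b) c = unit_vec (fst M) r \<and> snd E b *\<^sub>v (snd E (L ! c) *\<^sub>v v) = snd E (L ! r) *\<^sub>v v) \<or>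
        (col (snd M b) c = 0\<^sub>v (fst M) \<and> snd E b *\<^sub>v (snd E (L ! c) *\<^sub>v v) = 0\<^sub>v (fst E))"
      if b: "b \<in> set (basisA Q)" and c: "c < fst M" for b c
    proof -
      have x: "L ! c \<in> set (Pbasis Q i)" using L_Pbasis c M_dim by simp
      show ?thesis
      proof (cases "mulB Q b (L ! c)")
        case None
        have "col (snd M b) c = 0\<^sub>v (fst M)"
          unfolding M_dim unfolding M L_def by (rule Ptil_col_zero) (use c M_dim None in \<open>simp_all add: L_def\<close>)
        moreover have "snd E b *\<^sub>v (snd E (L ! c) *\<^sub>v v) = 0\<^sub>v (fst E)"
          using rel[OF b x] None by simp
        ultimately show ?thesis by blast
      next
        case (Some d)
        then have "d \<in> set L" using Pbasis_mulB_closed[OF i b x] unfolding L_def by blast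
        then obtain r where r: "r < length L" "d = L ! r" by (auto simp: in_set_conv_nth)
        have "col (snd M b) c = unit_vec (fst M) r"
          unfolding M_dim unfolding M L_def by (rule Ptil_col_unit) (use c M_dim r Some in \<open>simp_all add: L_def\<close>)
        moreover have "snd E b *\<^sub>v (snd E (L ! c) *\<^sub>v v) = snd E (L ! r) *\<^sub>v v"
          using rel[OF b x] Some r(2) by simp
        ultimately show ?thesis using r M_dim by auto
      qed
    qed
  qed
qed

text \<open>This is where Hom(S_i, N) = 0 enters: a loop at i maps the generator into the image
  of f, onto a vector of N at i that is killed by all arrows.\<close>
lemma Ptil_loop_kills_generator:
  assumes M: "M = Ptil Q i" and i: "i < nv Q" and N: "hom_from_simple_zero Q i N"
    and v: "v \<in> carrier_vec (fst E)" "g *\<^sub>v v = unit_vec (fst M) 0"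
    and l: "l < na Q" "is_loop Q l" "src Q l = i"
  shows "snd E (Arr l) *\<^sub>v v = 0\<^sub>v (fst E)"
proof -
  define x where "x = snd E (Arr l) *\<^sub>v v"
  have pos: "0 < length (Pbasis Q i)" and L0: "Pbasis Q i ! 0 = Vtx i" using Pbasis_eq[OF i] by simp_all
  have "col (snd M (Arr l)) 0 = 0\<^sub>v (fst M)"
    unfolding M fst_Ptil by (rule Ptil_col_zero) (use pos L0 l in simp_all)
  then have "g *\<^sub>v x = 0\<^sub>v (fst M)"
    unfolding x_def using g_unit_vec[of "Arr l" v 0] v l pos M by simp
  moreover have "x \<in> carrier_vec (fst E)" unfolding x_def using v l by simp
  ultimately obtain u where u: "u \<in> carrier_vec (fst N)" "x = f *\<^sub>v u"
    using ker_g by metis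
  have "tgt Q l = i" using l by (simp add: is_loop_def)
  then have "f *\<^sub>v (snd N (Vtx i) *\<^sub>v u) = f *\<^sub>v u"
    using f_mult_vec[of "Vtx i" u] E_mult_vec_mult_vec[of "Vtx i" "Arr l" v] i u l v
    unfolding x_def by simp
  then have "snd N (Vtx i) *\<^sub>v u = u" by (rule f_inj[OF mult_mat_vec_carrier[OF N_carrier u(1)] u(1)])
  moreover have "snd N (Arr a) *\<^sub>v u = 0\<^sub>v (fst N)" if a: "a < na Q" for a
  proof (rule f_inj)
    show "f *\<^sub>v (snd N (Arr a) *\<^sub>v u) = f *\<^sub>v 0\<^sub>v (fst N)"
      using f_mult_vec[of "Arr a" u] E_mult_vec_mult_vec[of "Arr a" "Arr l" v] a u l v f_carrier
      unfolding x_def by simp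
  qed (rule mult_mat_vec_carrier[OF N_carrier u(1)], simp)
  ultimately have "u = 0\<^sub>v (fst N)" using N u unfolding hom_from_simple_zero_def by blast
  then show ?thesis using u f_carrier unfolding x_def by simp
qed

lemma Ptil_splits:
  assumes M: "M = Ptil Q i" and i: "i < nv Q" and N: "hom_from_simple_zero Q i N"
  shows "\<exists>s. is_hom Q M E s \<and> g * s = 1\<^sub>m (fst M)"
proof -
  have pos: "0 < length (Pbasis Q i)" and L0: "Pbasis Q i ! 0 = Vtx i" using Pbasis_eq[OF i] by simp_all
  obtain v0 where v0: "v0 \<in> carrier_vec (fst E)" "g *\<^sub>v v0 = unit_vec (fst M) 0"
    using g_surj[of "unit_vec (fst M) 0"] by auto
  define v where "v = snd E (Vtx i) *\<^sub>v v0"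
  have v: "v \<in> carrier_vec (fst E)" unfolding v_def using v0 i by simp
  have ei_v: "snd E (Vtx i) *\<^sub>v v = v"
    unfolding v_def using E_mult_vec_mult_vec[of "Vtx i" "Vtx i" v0] i v0 by simp
  have "col (snd M (Vtx i)) 0 = unit_vec (fst M) 0"
    unfolding M fst_Ptil by (rule Ptil_col_unit) (use pos L0 in simp_all)
  then have g_v: "g *\<^sub>v v = unit_vec (fst M) 0"
    unfolding v_def using g_unit_vec[of "Vtx i" v0 0] v0 i pos M by simp
  show ?thesis
  proof (rule Ptil_section_of_generator[OF M i v g_v])
    fix b x assume b: "b \<in> set (basisA Q)" and x: "x \<in> set (Pbasis Q i)"
    have x_basisA: "x \<in> set (basisA Q)" using x Pbasis_subset_basisA by blast
    show "snd E b *\<^sub>v (snd E x *\<^sub>v v) = (case mulB Q b x of None \<Rightarrow> 0\<^sub>v (fst E) | Some d \<Rightarrow> snd E d *\<^sub>v v)"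
    proof (cases "loop_elt Q b")
      case False
      have "\<not> loop_elt Q x" using x basisB_not_loop by (auto simp: Pbasis_def)
      then show ?thesis using False E_mult_vec_mult_vec[OF b x_basisA v] by (simp add: mulB_def)
    next
      case True
      then obtain l where l: "b = Arr l" "is_loop Q l" by (cases b) auto
      have "x = Vtx i \<or> (\<exists>a. x = Arr a)" using x set_Pbasis[OF i] by auto
      then show ?thesis
      proof
        assume x_i: "x = Vtx i"
        have "snd E (Arr l) *\<^sub>v v = 0\<^sub>v (fst E)"
        proof (cases "src Q l = i")
          case True
          then show ?thesis using Ptil_loop_kills_generator[OF M i N v g_v] l b by simp
        next
          case False
          then show ?thesis using E_mult_vec_mult_vec[of b "Vtx i" v] ei_v l b i v by simp
        qed
        then show ?thesis using x_i ei_v l by (simp add: mulB_def)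
      qed (use l b E_mult_vec_mult_vec[OF b x_basisA v] in \<open>auto simp: mulB_def\<close>)
    qed
  qed
qed

end

lemma Ext1_zero_Ptil:
  assumes "quiver_wf Q" "i < nv Q" "\<And>b. snd N b \<in> carrier_mat (fst N) (fst N)"
    and "hom_from_simple_zero Q i N"
  shows "Ext1_zero Q (Ptil Q i) N"
  by (rule Ext1_zeroI[OF assms(1,3) Ptil_carrier], rule extension.Ptil_splits[OF _ refl assms(2,4)])

subsection \<open>Extensions by I~_j\<close>

lemma dual_mod_Vtx_mult_vec_index:
  assumes R: "distinct R" and u: "u \<in> carrier_vec (length R)" and r: "r < length R"
  shows "(snd (dual_mod Q R) (Vtx w) *\<^sub>v u) $ r
    = (if mulB Q (R ! r) (Vtx w) = Some (R ! r) then u $ r else 0)"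
proof -
  have unique: "mulB Q (R ! r) (Vtx w) = Some (R ! c) \<longleftrightarrow> c = r \<and> mulB Q (R ! r) (Vtx w) = Some (R ! r)"
    if c: "c < length R" for c
  proof -
    have "mulB Q x (Vtx w) = Some y \<Longrightarrow> y = x" for x y by (cases x) (auto split: if_splits)
    then show ?thesis using nth_eq_iff_index_eq[OF R c r] by metis
  qed
  show ?thesis
  proof (cases "mulB Q (R ! r) (Vtx w) = Some (R ! r)")
    case True
    have "(\<Sum>c<length R. if mulB Q (R ! r) (Vtx w) = Some (R ! c) then u $ c else 0) = u $ r"
      by (rule sum_if_unique[OF r]) (use unique True in auto)
    then show ?thesis using True unfolding dual_mod_mult_vec_index[OF u r] by simp
  next
    case False
    have "(\<Sum>c<length R. if mulB Q (R ! r) (Vtx w) = Some (R ! c) then u $ c else 0) = 0"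
      by (rule sum_if_never) (use unique False in auto)
    then show ?thesis using False unfolding dual_mod_mult_vec_index[OF u r] by simp
  qed
qed

lemma Itil_Arr_mult_vec_index_0:
  assumes j: "j < nv Q" and u: "u \<in> carrier_vec (length (Ibasis Q j))"
    and k: "k < length (Ibasis Q j)" "Ibasis Q j ! k = Arr a"
  shows "(snd (Itil Q j) (Arr a) *\<^sub>v u) $ 0 = u $ k"
proof -
  have "Arr a \<in> set (Ibasis Q j)" using k nth_mem by metis
  then have a: "a \<in> set (in_arrows Q j)" using Ibasis_eq[OF j] by auto
  have R0: "Ibasis Q j ! 0 = Vtx j" and pos: "0 < length (Ibasis Q j)" using Ibasis_eq[OF j] by simp_all
  show ?thesis unfolding Itil_dual_mod dual_mod_mult_vec_index[OF u pos]
  proof (rule sum_if_unique[OF k(1)])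
    fix c assume c: "c < length (Ibasis Q j)"
    show "mulB Q (Ibasis Q j ! 0) (Arr a) = Some (Ibasis Q j ! c) \<longleftrightarrow> c = k"
      using R0 a k(2) nth_eq_iff_index_eq[OF distinct_Ibasis c k(1)] by auto
  qed
qed

lemma Itil_socle:
  assumes j: "j < nv Q" and u: "u \<in> carrier_vec (length (Ibasis Q j))"
    and arrows: "\<And>a. a < na Q \<Longrightarrow> snd (Itil Q j) (Arr a) *\<^sub>v u = 0\<^sub>v (length (Ibasis Q j))"
  shows "u = (u $ 0) \<cdot>\<^sub>v unit_vec (length (Ibasis Q j)) 0"
proof (rule eq_vecI)
  fix r assume "r < dim_vec ((u $ 0) \<cdot>\<^sub>v unit_vec (length (Ibasis Q j)) 0)"
  then have r: "r < Suc (length (in_arrows Q j))" using Ibasis_eq[OF j] by simp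
  then show "u $ r = ((u $ 0) \<cdot>\<^sub>v unit_vec (length (Ibasis Q j)) 0) $ r"
  proof (cases rule: nth_Vtx_Arr_cases[where i = j])
    case (2 a)
    then have "u $ r = (snd (Itil Q j) (Arr a) *\<^sub>v u) $ 0"
      using Itil_Arr_mult_vec_index_0[OF j u, of r a] r Ibasis_eq[OF j] by simp
    also have "\<dots> = 0" using arrows[of a] 2 Ibasis_eq[OF j] by simp
    finally show ?thesis using r 2 Ibasis_eq[OF j] by simp
  qed (use r Ibasis_eq[OF j] in simp)
qed (use u in simp)

lemma Itil_Vtx_mult_socle:
  assumes j: "j < nv Q"
  shows "snd (Itil Q j) (Vtx w) *\<^sub>v (c \<cdot>\<^sub>v unit_vec (length (Ibasis Q j)) 0)
    = (if w = j then c \<cdot>\<^sub>v unit_vec (length (Ibasis Q j)) 0 else 0\<^sub>v (length (Ibasis Q j)))"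
proof (rule eq_vecI)
  fix r assume "r < dim_vec (if w = j then c \<cdot>\<^sub>v unit_vec (length (Ibasis Q j)) 0 else 0\<^sub>v (length (Ibasis Q j)))"
  then have r: "r < length (Ibasis Q j)" by (simp split: if_splits)
  have R0: "Ibasis Q j ! 0 = Vtx j" using Ibasis_eq[OF j] by simp
  have uc: "c \<cdot>\<^sub>v unit_vec (length (Ibasis Q j)) 0 \<in> carrier_vec (length (Ibasis Q j))" by simp
  show "(snd (Itil Q j) (Vtx w) *\<^sub>v (c \<cdot>\<^sub>v unit_vec (length (Ibasis Q j)) 0)) $ r
    = (if w = j then c \<cdot>\<^sub>v unit_vec (length (Ibasis Q j)) 0 else 0\<^sub>v (length (Ibasis Q j))) $ r"
    unfolding Itil_dual_mod dual_mod_Vtx_mult_vec_index[OF distinct_Ibasis uc r]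
    using r R0 by (cases "r = 0") (auto simp: unit_vec_def)
qed (simp add: Itil_dual_mod snd_dual_mod)

definition in_arrow_vec :: "quiver \<Rightarrow> nat \<Rightarrow> nat \<Rightarrow> (nat \<Rightarrow> 'k::field) \<Rightarrow> 'k vec" where
  "in_arrow_vec Q j v c = vec (length (Ibasis Q j))
     (\<lambda>r. case Ibasis Q j ! r of Arr b \<Rightarrow> if src Q b = v then c b else 0 | Vtx _ \<Rightarrow> 0)"

lemma in_arrow_vec_carrier [simp]: "in_arrow_vec Q j v c \<in> carrier_vec (length (Ibasis Q j))"
  by (simp add: in_arrow_vec_def)

text \<open>Any family of scalars indexed by the arrows into j starting at v is realised,
  in the socle, by the action of the arrows on a single vector concentrated at v.\<close>
lemma Itil_Arr_mult_in_arrow_vec: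
  assumes j: "j < nv Q" and b: "b < na Q"
  shows "snd (Itil Q j) (Arr b) *\<^sub>v in_arrow_vec Q j v c = (if b \<in> set (in_arrows Q j) \<and> src Q b = v
    then c b \<cdot>\<^sub>v unit_vec (length (Ibasis Q j)) 0 else 0\<^sub>v (length (Ibasis Q j)))"
proof (rule eq_vecI)
  define R where "R = Ibasis Q j"
  have R: "R = Vtx j # map Arr (in_arrows Q j)" unfolding R_def using Ibasis_eq[OF j] .
  have z: "in_arrow_vec Q j v c \<in> carrier_vec (length R)" unfolding R_def by simp
  have dR: "distinct R" unfolding R_def by (rule distinct_Ibasis)
  have R0: "R ! 0 = Vtx j" using R by simp
  fix r assume "r < dim_vec (if b \<in> set (in_arrows Q j) \<and> src Q b = v
    then c b \<cdot>\<^sub>v unit_vec (length (Ibasis Q j)) 0 else 0\<^sub>v (length (Ibasis Q j)))"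
  then have r: "r < length R" unfolding R_def by (simp split: if_splits)
  have sum: "(snd (Itil Q j) (Arr b) *\<^sub>v in_arrow_vec Q j v c) $ r
    = (\<Sum>t<length R. if mulB Q (R ! r) (Arr b) = Some (R ! t) then in_arrow_vec Q j v c $ t else 0)"
    unfolding Itil_dual_mod R_def[symmetric] by (rule dual_mod_mult_vec_index[OF z r])
  from r have "r < Suc (length (in_arrows Q j))" unfolding R by simp
  then show "(snd (Itil Q j) (Arr b) *\<^sub>v in_arrow_vec Q j v c) $ r = (if b \<in> set (in_arrows Q j) \<and> src Q b = v
    then c b \<cdot>\<^sub>v unit_vec (length (Ibasis Q j)) 0 else 0\<^sub>v (length (Ibasis Q j))) $ r"
  proof (cases rule: nth_Vtx_Arr_cases[where i = j])
    case 1
    show ?thesis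
    proof (cases "b \<in> set (in_arrows Q j)")
      case True
      then obtain k where k: "0 < k" "k < Suc (length (in_arrows Q j))"
        "(Vtx j # map Arr (in_arrows Q j)) ! k = Arr b"
        by (rule nth_Vtx_Arr_index)
      have kR: "k < length R" "R ! k = Arr b" using k unfolding R by simp_all
      have "(snd (Itil Q j) (Arr b) *\<^sub>v in_arrow_vec Q j v c) $ r = in_arrow_vec Q j v c $ k"
        unfolding sum
      proof (rule sum_if_unique[OF kR(1)])
        fix t assume t: "t < length R"
        show "mulB Q (R ! r) (Arr b) = Some (R ! t) \<longleftrightarrow> t = k"
          using 1 True kR(2) nth_eq_iff_index_eq[OF dR t kR(1)] R0 by auto
      qed
      then show ?thesis using k 1 True unfolding in_arrow_vec_def R_def[symmetric] R by auto
    next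
      case False
      have "(snd (Itil Q j) (Arr b) *\<^sub>v in_arrow_vec Q j v c) $ r = 0"
        unfolding sum by (rule sum_if_never) (use 1 False b in \<open>auto simp: R\<close>)
      then show ?thesis using False r b unfolding R_def[symmetric] by auto
    qed
  next
    case (2 a)
    have "(snd (Itil Q j) (Arr b) *\<^sub>v in_arrow_vec Q j v c) $ r = 0"
      unfolding sum by (rule sum_if_never) (use 2 in \<open>simp add: R\<close>)
    then show ?thesis using 2 r unfolding R_def[symmetric] by (auto simp: unit_vec_def)
  qed
qed (simp add: Itil_dual_mod snd_dual_mod)

lemma Itil_Vtx_mult_in_arrow_vec:
  assumes j: "j < nv Q"
  shows "snd (Itil Q j) (Vtx w) *\<^sub>v in_arrow_vec Q j v c
    = (if w = v then in_arrow_vec Q j v c else 0\<^sub>v (length (Ibasis Q j)))"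
proof (rule eq_vecI)
  define R where "R = Ibasis Q j"
  have R: "R = Vtx j # map Arr (in_arrows Q j)" unfolding R_def using Ibasis_eq[OF j] .
  have z: "in_arrow_vec Q j v c \<in> carrier_vec (length R)" unfolding R_def by simp
  fix r assume "r < dim_vec (if w = v then in_arrow_vec Q j v c else 0\<^sub>v (length (Ibasis Q j)))"
  then have r: "r < length R" unfolding R_def by (simp add: in_arrow_vec_def split: if_splits)
  have e: "(snd (Itil Q j) (Vtx w) *\<^sub>v in_arrow_vec Q j v c) $ r
    = (if mulB Q (R ! r) (Vtx w) = Some (R ! r) then in_arrow_vec Q j v c $ r else 0)"
    unfolding Itil_dual_mod R_def[symmetric]
    by (rule dual_mod_Vtx_mult_vec_index[OF _ z r]) (simp add: R_def distinct_Ibasis)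
  from r have "r < Suc (length (in_arrows Q j))" unfolding R by simp
  then show "(snd (Itil Q j) (Vtx w) *\<^sub>v in_arrow_vec Q j v c) $ r
    = (if w = v then in_arrow_vec Q j v c else 0\<^sub>v (length (Ibasis Q j))) $ r"
    unfolding e by (cases rule: nth_Vtx_Arr_cases[where i = j])
      (use r in \<open>auto simp: in_arrow_vec_def R_def[symmetric] R\<close>)
qed (simp add: Itil_dual_mod snd_dual_mod in_arrow_vec_def)

lemma dual_mod_col_0:
  assumes R: "R = Vtx i # map Arr bs"
  shows "col (snd (dual_mod Q R) b) 0 = (if b = Vtx i then unit_vec (length R) 0 else 0\<^sub>v (length R))"
proof -
  have R0: "R ! 0 = Vtx i" and pos: "0 < length R" and Rv: "r < length R \<Longrightarrow> R ! r = Vtx i \<longleftrightarrow> r = 0" for r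
    using nth_Vtx_Arr_eq_Vtx_iff[of r bs i i] unfolding R by simp_all
  show ?thesis unfolding col_dual_mod[OF pos] R0 mulB_eq_Some_Vtx
    using pos by (auto intro!: indicator_vec_eq_unit_vec indicator_vec_eq_zero simp: Rv)
qed

lemma dual_mod_col_Arr:
  assumes R: "R = Vtx i # map Arr bs" and bs: "distinct bs" "set bs \<subseteq> set (in_arrows Q i)"
    and c: "c < length R" "R ! c = Arr a"
  shows "col (snd (dual_mod Q R) b) c = (if b = Arr a then unit_vec (length R) 0
    else if b = Vtx (src Q a) then unit_vec (length R) c else 0\<^sub>v (length R))"
proof -
  have "Arr a \<in> set R" using c nth_mem by metis
  then have a: "\<not> is_loop Q a" "tgt Q a = i" using bs(2) R by auto
  have Rv: "r < length R \<Longrightarrow> R ! r = Vtx i \<longleftrightarrow> r = 0" for r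
    using nth_Vtx_Arr_eq_Vtx_iff[of r bs i i] unfolding R by simp
  have Ra: "r < length R \<Longrightarrow> R ! r = Arr a \<longleftrightarrow> r = c" for r
    using nth_eq_iff_index_eq[OF _ _ c(1), of r] distinct_Vtx_Arr[OF bs(1)] c(2) unfolding R by auto
  have pos: "0 < length R" unfolding R by simp
  show ?thesis unfolding col_dual_mod[OF c(1)] c(2) mulB_eq_Some_Arr
    using pos by (auto intro!: indicator_vec_eq_unit_vec indicator_vec_eq_zero simp: a Rv Ra c(1))
qed

locale Itil_extension = extension +
  fixes j :: nat
  assumes N_Itil: "N = Itil Q j" and j: "j < nv Q"
begin

lemma fst_N: "fst N = length (Ibasis Q j)"
  by (simp add: N_Itil Itil_dual_mod)

lemma ker_g_socle:
  assumes x: "x \<in> carrier_vec (fst E)" "g *\<^sub>v x = 0\<^sub>v (fst M)"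
    and arrows: "\<And>b. b < na Q \<Longrightarrow> snd E (Arr b) *\<^sub>v x = 0\<^sub>v (fst E)"
  obtains c where "x = f *\<^sub>v (c \<cdot>\<^sub>v unit_vec (fst N) 0)"
proof -
  obtain u where u: "u \<in> carrier_vec (fst N)" "x = f *\<^sub>v u" using ker_g[OF x] by blast
  have "snd N (Arr b) *\<^sub>v u = 0\<^sub>v (fst N)" if b: "b < na Q" for b
  proof (rule f_inj)
    show "f *\<^sub>v (snd N (Arr b) *\<^sub>v u) = f *\<^sub>v 0\<^sub>v (fst N)"
      using f_mult_vec[of "Arr b" u] b u arrows[OF b] f_carrier by simp
  qed (rule mult_mat_vec_carrier[OF N_carrier u(1)], simp)
  then have "u = (u $ 0) \<cdot>\<^sub>v unit_vec (length (Ibasis Q j)) 0"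
    using Itil_socle[OF j, of u] u(1) unfolding fst_N unfolding N_Itil by blast
  then have "u = (u $ 0) \<cdot>\<^sub>v unit_vec (fst N) 0" unfolding fst_N .
  then show thesis using that u(2) by metis
qed

lemma ker_g_socle_eq_zero:
  assumes x: "x \<in> carrier_vec (fst E)" "g *\<^sub>v x = 0\<^sub>v (fst M)"
    and arrows: "\<And>b. b < na Q \<Longrightarrow> snd E (Arr b) *\<^sub>v x = 0\<^sub>v (fst E)"
    and w: "w < nv Q" "w \<noteq> j" "snd E (Vtx w) *\<^sub>v x = x"
  shows "x = 0\<^sub>v (fst E)"
proof -
  obtain c where c: "x = f *\<^sub>v (c \<cdot>\<^sub>v unit_vec (fst N) 0)" using ker_g_socle[OF x arrows] .
  have "x = f *\<^sub>v (snd N (Vtx w) *\<^sub>v (c \<cdot>\<^sub>v unit_vec (fst N) 0))"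
    using f_mult_vec[of "Vtx w" "c \<cdot>\<^sub>v unit_vec (fst N) 0"] w c by simp
  also have "\<dots> = 0\<^sub>v (fst E)"
    unfolding fst_N unfolding N_Itil Itil_Vtx_mult_socle[OF j] using w(2) f_carrier fst_N by simp
  finally show ?thesis .
qed

lemma arrow_defect:
  assumes Y: "Y \<in> carrier_vec (fst E)" and b: "b < na Q" and T: "T \<in> carrier_vec (fst E)"
    and T_tgt: "snd E (Vtx (tgt Q b)) *\<^sub>v T = T"
    and T_g: "g *\<^sub>v (snd E (Arr b) *\<^sub>v Y - T) = 0\<^sub>v (fst M)"
    and T_arrows: "\<And>b'. b' < na Q \<Longrightarrow> snd E (Arr b') *\<^sub>v T = 0\<^sub>v (fst E)"
  shows "\<exists>c. snd E (Arr b) *\<^sub>v Y - T = f *\<^sub>v (c \<cdot>\<^sub>v unit_vec (fst N) 0)"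
    and "tgt Q b \<noteq> j \<Longrightarrow> snd E (Arr b) *\<^sub>v Y - T = 0\<^sub>v (fst E)"
proof -
  define D where "D = snd E (Arr b) *\<^sub>v Y - T"
  have EY: "snd E (Arr b) *\<^sub>v Y \<in> carrier_vec (fst E)" using Y b by simp
  have D: "D \<in> carrier_vec (fst E)" unfolding D_def using EY T by simp
  have D_arrows: "snd E (Arr b') *\<^sub>v D = 0\<^sub>v (fst E)" if b': "b' < na Q" for b'
  proof -
    have "snd E (Arr b') *\<^sub>v D = snd E (Arr b') *\<^sub>v (snd E (Arr b) *\<^sub>v Y) - snd E (Arr b') *\<^sub>v T"
      unfolding D_def using mult_minus_distrib_mat_vec[OF E_carrier EY T] b' by simp
    then show ?thesis using E_mult_vec_mult_vec[of "Arr b'" "Arr b" Y] T_arrows[OF b'] b b' Y by simp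
  qed
  show "\<exists>c. snd E (Arr b) *\<^sub>v Y - T = f *\<^sub>v (c \<cdot>\<^sub>v unit_vec (fst N) 0)"
    using ker_g_socle[OF D T_g[folded D_def] D_arrows] unfolding D_def by metis
  assume tgt_b: "tgt Q b \<noteq> j"
  have t: "tgt Q b < nv Q" using wf b by (simp add: quiver_wf_def)
  have "snd E (Vtx (tgt Q b)) *\<^sub>v D
      = snd E (Vtx (tgt Q b)) *\<^sub>v (snd E (Arr b) *\<^sub>v Y) - snd E (Vtx (tgt Q b)) *\<^sub>v T"
    unfolding D_def using mult_minus_distrib_mat_vec[OF E_carrier EY T] t by simp
  then have "snd E (Vtx (tgt Q b)) *\<^sub>v D = D"
    unfolding D_def using E_mult_vec_mult_vec[of "Vtx (tgt Q b)" "Arr b" Y] T_tgt b Y t by simp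
  then show "snd E (Arr b) *\<^sub>v Y - T = 0\<^sub>v (fst E)"
    using ker_g_socle_eq_zero[OF D T_g[folded D_def] _ t tgt_b] D_arrows unfolding D_def by blast
qed

text \<open>Correcting a lift Y at a vertex v different from j by an element of the image of f,
  the arrows can be made to act on it in any prescribed way compatible with g.\<close>
lemma lift_with_arrow_action:
  assumes Y: "Y \<in> carrier_vec (fst E)" and v: "v < nv Q" "v \<noteq> j" and Yv: "snd E (Vtx v) *\<^sub>v Y = Y"
    and T_carrier: "\<And>b. b < na Q \<Longrightarrow> T b \<in> carrier_vec (fst E)"
    and T_src: "\<And>b. b < na Q \<Longrightarrow> src Q b \<noteq> v \<Longrightarrow> T b = 0\<^sub>v (fst E)"
    and T_tgt: "\<And>b. b < na Q \<Longrightarrow> snd E (Vtx (tgt Q b)) *\<^sub>v T b = T b"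
    and T_g: "\<And>b. b < na Q \<Longrightarrow> g *\<^sub>v (snd E (Arr b) *\<^sub>v Y - T b) = 0\<^sub>v (fst M)"
    and T_arrows: "\<And>b b'. b < na Q \<Longrightarrow> b' < na Q \<Longrightarrow> snd E (Arr b') *\<^sub>v T b = 0\<^sub>v (fst E)"
  obtains W where "W \<in> carrier_vec (fst E)" "g *\<^sub>v W = g *\<^sub>v Y"
    and "\<And>b. b < na Q \<Longrightarrow> snd E (Arr b) *\<^sub>v W = T b"
    and "\<And>w. w < nv Q \<Longrightarrow> snd E (Vtx w) *\<^sub>v W = (if w = v then W else 0\<^sub>v (fst E))"
proof -
  note defect = arrow_defect[OF Y _ T_carrier T_tgt T_g T_arrows]
  have EY: "b < na Q \<Longrightarrow> snd E (Arr b) *\<^sub>v Y \<in> carrier_vec (fst E)" for b using Y by simp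
  obtain coef where coef: "\<And>b. b < na Q \<Longrightarrow> snd E (Arr b) *\<^sub>v Y - T b = f *\<^sub>v (coef b \<cdot>\<^sub>v unit_vec (fst N) 0)"
    using defect(1) by metis
  define z where "z = in_arrow_vec Q j v coef"
  have z: "z \<in> carrier_vec (fst N)" unfolding z_def fst_N by simp
  have z_Arr: "snd N (Arr b) *\<^sub>v z = (if b \<in> set (in_arrows Q j) \<and> src Q b = v
      then coef b \<cdot>\<^sub>v unit_vec (fst N) 0 else 0\<^sub>v (fst N))" if "b < na Q" for b
    unfolding z_def N_Itil fst_Itil using Itil_Arr_mult_in_arrow_vec[OF j that] .
  have z_Vtx: "snd N (Vtx w) *\<^sub>v z = (if w = v then z else 0\<^sub>v (fst N))" for w
    unfolding z_def N_Itil fst_Itil using Itil_Vtx_mult_in_arrow_vec[OF j] .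
  define W where "W = Y - f *\<^sub>v z"
  have fz: "f *\<^sub>v z \<in> carrier_vec (fst E)" using f_carrier z by simp
  have E_W: "snd E b *\<^sub>v W = snd E b *\<^sub>v Y - f *\<^sub>v (snd N b *\<^sub>v z)" if "b \<in> set (basisA Q)" for b
    unfolding W_def using mult_minus_distrib_mat_vec[OF E_carrier[OF that] Y fz] f_mult_vec[OF that z] by simp
  show thesis
  proof
    show "W \<in> carrier_vec (fst E)" unfolding W_def using Y fz by simp
    show "g *\<^sub>v W = g *\<^sub>v Y"
      unfolding W_def using mult_minus_distrib_mat_vec[OF g_carrier Y fz] g_f_mult_vec[OF z] g_carrier Y by simp
    show "snd E (Arr b) *\<^sub>v W = T b" if b: "b < na Q" for b
    proof (cases "b \<in> set (in_arrows Q j) \<and> src Q b = v")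
      case True
      then have "f *\<^sub>v (snd N (Arr b) *\<^sub>v z) = snd E (Arr b) *\<^sub>v Y - T b" using z_Arr b coef by simp
      then show ?thesis using E_W[of "Arr b"] b minus_minus_vec[OF EY[OF b] T_carrier[OF b]] by simp
    next
      case False
      then have "snd N (Arr b) *\<^sub>v z = 0\<^sub>v (fst N)" using z_Arr[OF b] by presburger
      then have E_W_Y: "snd E (Arr b) *\<^sub>v W = snd E (Arr b) *\<^sub>v Y"
        using E_W[of "Arr b"] b f_carrier EY by simp
      show ?thesis
      proof (cases "src Q b = v")
        case False
        have "snd E (Arr b) *\<^sub>v Y = 0\<^sub>v (fst E)"
          using Yv E_mult_vec_mult_vec[of "Arr b" "Vtx v" Y] b v Y False by auto
        then show ?thesis using E_W_Y T_src[OF b False] by simp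
      next
        case True
        then have "tgt Q b \<noteq> j" using False v(2) b by (auto simp: is_loop_def)
        then have "snd E (Arr b) *\<^sub>v Y - T b = 0\<^sub>v (fst E)" using defect(2) b by blast
        then show ?thesis using E_W_Y minus_vec_eq_zero_iff[OF EY T_carrier] b by simp
      qed
    qed
    show "snd E (Vtx w) *\<^sub>v W = (if w = v then W else 0\<^sub>v (fst E))" if w: "w < nv Q" for w
      using E_W[of "Vtx w"] w z_Vtx E_mult_vec_mult_vec[of "Vtx w" "Vtx v" Y] v Y Yv f_carrier
      unfolding W_def by auto
  qed
qed

end

locale dual_Itil_extension = Itil_extension +
  fixes i :: nat and bs :: "nat list"
  assumes i: "i < nv Q" and M_dual: "M = dual_mod Q (Vtx i # map Arr bs)"
    and distinct_bs: "distinct bs" and bs_in: "set bs \<subseteq> set (in_arrows Q i)"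
    and bs_src: "\<And>a. a \<in> set bs \<Longrightarrow> src Q a \<noteq> j" and i_j_bs: "i \<noteq> j \<or> bs \<noteq> []"
begin

lemma fst_M: "fst M = Suc (length bs)"
  by (simp add: M_dual)

lemma position_Arr:
  assumes "0 < c" "c < fst M"
  shows "(Vtx i # map Arr bs) ! c = Arr (bs ! (c - 1))" and "bs ! (c - 1) \<in> set bs"
  using assms by (simp_all add: fst_M nth_Cons')

lemma col_M_0: "col (snd M b) 0 = (if b = Vtx i then unit_vec (fst M) 0 else 0\<^sub>v (fst M))"
  unfolding M_dual fst_dual_mod by (rule dual_mod_col_0) simp

lemma col_M_Arr:
  assumes "0 < c" "c < fst M"
  shows "col (snd M b) c = (if b = Arr (bs ! (c - 1)) then unit_vec (fst M) 0
    else if b = Vtx (src Q (bs ! (c - 1))) then unit_vec (fst M) c else 0\<^sub>v (fst M))"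
  unfolding M_dual fst_dual_mod by (rule dual_mod_col_Arr[OF refl distinct_bs bs_in])
    (use assms position_Arr in \<open>simp_all add: M_dual\<close>)

lemma lift_at_vertex:
  assumes c: "c < fst M" and v: "v < nv Q" and col: "col (snd M (Vtx v)) c = unit_vec (fst M) c"
  obtains Y where "Y \<in> carrier_vec (fst E)" "g *\<^sub>v Y = unit_vec (fst M) c" "snd E (Vtx v) *\<^sub>v Y = Y"
proof -
  obtain y where y: "y \<in> carrier_vec (fst E)" "g *\<^sub>v y = unit_vec (fst M) c"
    using g_surj[of "unit_vec (fst M) c"] by auto
  show thesis
  proof
    show "snd E (Vtx v) *\<^sub>v y \<in> carrier_vec (fst E)" using y v by simp
    show "g *\<^sub>v (snd E (Vtx v) *\<^sub>v y) = unit_vec (fst M) c"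
      using g_unit_vec[of "Vtx v" y c] y v c col by simp
    show "snd E (Vtx v) *\<^sub>v (snd E (Vtx v) *\<^sub>v y) = snd E (Vtx v) *\<^sub>v y"
      using E_mult_vec_mult_vec[of "Vtx v" "Vtx v" y] y v by simp
  qed
qed

text \<open>The lift of the socle vector: if bs is empty it is corrected at i \<noteq> j, otherwise
  it is the image of the lift at the source of the first arrow.\<close>
lemma socle_lift:
  obtains w0 where "w0 \<in> carrier_vec (fst E)" "g *\<^sub>v w0 = unit_vec (fst M) 0"
    and "\<And>b. b < na Q \<Longrightarrow> snd E (Arr b) *\<^sub>v w0 = 0\<^sub>v (fst E)"
    and "\<And>w. w < nv Q \<Longrightarrow> snd E (Vtx w) *\<^sub>v w0 = (if w = i then w0 else 0\<^sub>v (fst E))"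
proof (cases "bs = []")
  case True
  then have ij: "i \<noteq> j" using i_j_bs by simp
  obtain Y where Y: "Y \<in> carrier_vec (fst E)" "g *\<^sub>v Y = unit_vec (fst M) 0" "snd E (Vtx i) *\<^sub>v Y = Y"
    using lift_at_vertex[of 0 i] col_M_0 i fst_M by auto
  show thesis
  proof (rule lift_with_arrow_action[OF Y(1) i ij Y(3), of "\<lambda>_. 0\<^sub>v (fst E)"])
    show "g *\<^sub>v (snd E (Arr b) *\<^sub>v Y - 0\<^sub>v (fst E)) = 0\<^sub>v (fst M)" if "b < na Q" for b
      using g_unit_vec[of "Arr b" Y 0] that Y col_M_0 fst_M by simp
    show "snd E (Vtx (tgt Q b)) *\<^sub>v 0\<^sub>v (fst E) = 0\<^sub>v (fst E)" if "b < na Q" for b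
      using E_carrier[of "Vtx (tgt Q b)"] wf that by (simp add: quiver_wf_def)
    show "snd E (Arr b') *\<^sub>v 0\<^sub>v (fst E) = 0\<^sub>v (fst E)" if "b' < na Q" for b'
      using E_carrier[of "Arr b'"] that by simp
  qed (use that Y in auto)
next
  case False
  define a where "a = hd bs"
  have a: "a \<in> set bs" "(Vtx i # map Arr bs) ! 1 = Arr a" and c: "0 < (1::nat)" "1 < fst M"
    unfolding a_def using False fst_M by (auto simp: hd_conv_nth)
  have a': "a < na Q" "\<not> is_loop Q a" "tgt Q a = i" "src Q a < nv Q"
    using a bs_in wf by (auto simp: quiver_wf_def)
  have a_pos: "bs ! (1 - 1) = a" unfolding a_def using False by (simp add: hd_conv_nth)
  obtain X where X: "X \<in> carrier_vec (fst E)" "g *\<^sub>v X = unit_vec (fst M) 1"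
    using lift_at_vertex[OF c(2) a'(4)] col_M_Arr[OF c] a_pos a' by auto
  show thesis
  proof
    show "snd E (Arr a) *\<^sub>v X \<in> carrier_vec (fst E)" using a' X by simp
    show "g *\<^sub>v (snd E (Arr a) *\<^sub>v X) = unit_vec (fst M) 0"
      using g_unit_vec[of "Arr a" X 1] a' X c col_M_Arr[OF c] a_pos by simp
    show "snd E (Arr b) *\<^sub>v (snd E (Arr a) *\<^sub>v X) = 0\<^sub>v (fst E)" if "b < na Q" for b
      using E_mult_vec_mult_vec[of "Arr b" "Arr a" X] that a' X by simp
    show "snd E (Vtx w) *\<^sub>v (snd E (Arr a) *\<^sub>v X) = (if w = i then snd E (Arr a) *\<^sub>v X else 0\<^sub>v (fst E))"
      if "w < nv Q" for w
      using E_mult_vec_mult_vec[of "Vtx w" "Arr a" X] that a' X by auto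
  qed
qed

lemma arrow_lift:
  assumes w0: "w0 \<in> carrier_vec (fst E)" "g *\<^sub>v w0 = unit_vec (fst M) 0"
    "\<And>b. b < na Q \<Longrightarrow> snd E (Arr b) *\<^sub>v w0 = 0\<^sub>v (fst E)"
    "\<And>w. w < nv Q \<Longrightarrow> snd E (Vtx w) *\<^sub>v w0 = (if w = i then w0 else 0\<^sub>v (fst E))"
    and c: "0 < c" "c < fst M"
  obtains W where "W \<in> carrier_vec (fst E)" "g *\<^sub>v W = unit_vec (fst M) c"
    and "\<And>b. b < na Q \<Longrightarrow> snd E (Arr b) *\<^sub>v W = (if b = bs ! (c - 1) then w0 else 0\<^sub>v (fst E))"
    and "\<And>w. w < nv Q \<Longrightarrow> snd E (Vtx w) *\<^sub>v W = (if w = src Q (bs ! (c - 1)) then W else 0\<^sub>v (fst E))"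
proof -
  define a where "a = bs ! (c - 1)"
  have "a \<in> set bs" unfolding a_def using position_Arr[OF c] by simp
  then have a: "a < na Q" "\<not> is_loop Q a" "tgt Q a = i" "src Q a < nv Q" "src Q a \<noteq> j"
    using bs_in wf bs_src by (auto simp: quiver_wf_def)
  have col_a: "col (snd M b) c = (if b = Arr a then unit_vec (fst M) 0
      else if b = Vtx (src Q a) then unit_vec (fst M) c else 0\<^sub>v (fst M))" for b
    unfolding a_def by (rule col_M_Arr[OF c])
  obtain Y where Y: "Y \<in> carrier_vec (fst E)" "g *\<^sub>v Y = unit_vec (fst M) c" "snd E (Vtx (src Q a)) *\<^sub>v Y = Y"
    using lift_at_vertex[OF c(2) a(4)] col_a by auto
  show thesis
  proof (rule lift_with_arrow_action[OF Y(1) a(4,5) Y(3), of "\<lambda>b. if b = a then w0 else 0\<^sub>v (fst E)"])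
    show "snd E (Vtx (tgt Q b)) *\<^sub>v (if b = a then w0 else 0\<^sub>v (fst E)) = (if b = a then w0 else 0\<^sub>v (fst E))"
      if "b < na Q" for b
      using w0(4) a i E_carrier[of "Vtx (tgt Q b)"] wf that by (auto simp: quiver_wf_def)
    show "g *\<^sub>v (snd E (Arr b) *\<^sub>v Y - (if b = a then w0 else 0\<^sub>v (fst E))) = 0\<^sub>v (fst M)"
      if b: "b < na Q" for b
    proof -
      have "g *\<^sub>v (snd E (Arr b) *\<^sub>v Y - (if b = a then w0 else 0\<^sub>v (fst E)))
          = g *\<^sub>v (snd E (Arr b) *\<^sub>v Y) - g *\<^sub>v (if b = a then w0 else 0\<^sub>v (fst E))"
        using mult_minus_distrib_mat_vec[OF g_carrier] b Y w0(1) by simp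
      then show ?thesis using g_unit_vec[of "Arr b" Y c] b Y c col_a w0(2) g_carrier by simp
    qed
    show "snd E (Arr b') *\<^sub>v (if b = a then w0 else 0\<^sub>v (fst E)) = 0\<^sub>v (fst E)"
      if "b < na Q" "b' < na Q" for b b'
      using w0(3) that E_carrier[of "Arr b'"] by auto
  qed (use w0(1) Y(2) that a_def in auto)
qed

lemma splits: "\<exists>s. is_hom Q M E s \<and> g * s = 1\<^sub>m (fst M)"
proof -
  obtain w0 where w0: "w0 \<in> carrier_vec (fst E)" "g *\<^sub>v w0 = unit_vec (fst M) 0"
    "\<And>b. b < na Q \<Longrightarrow> snd E (Arr b) *\<^sub>v w0 = 0\<^sub>v (fst E)"
    "\<And>w. w < nv Q \<Longrightarrow> snd E (Vtx w) *\<^sub>v w0 = (if w = i then w0 else 0\<^sub>v (fst E))"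
    using socle_lift by metis
  define lift where "lift c W \<longleftrightarrow> W \<in> carrier_vec (fst E) \<and> g *\<^sub>v W = unit_vec (fst M) c
    \<and> (\<forall>b<na Q. snd E (Arr b) *\<^sub>v W = (if b = bs ! (c - 1) then w0 else 0\<^sub>v (fst E)))
    \<and> (\<forall>w<nv Q. snd E (Vtx w) *\<^sub>v W = (if w = src Q (bs ! (c - 1)) then W else 0\<^sub>v (fst E)))" for c W
  have "\<exists>W. lift c W" if c: "0 < c" "c < fst M" for c
  proof -
    obtain W where "W \<in> carrier_vec (fst E)" "g *\<^sub>v W = unit_vec (fst M) c"
      "\<And>b. b < na Q \<Longrightarrow> snd E (Arr b) *\<^sub>v W = (if b = bs ! (c - 1) then w0 else 0\<^sub>v (fst E))"
      "\<And>w. w < nv Q \<Longrightarrow> snd E (Vtx w) *\<^sub>v W = (if w = src Q (bs ! (c - 1)) then W else 0\<^sub>v (fst E))"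
      using arrow_lift[OF w0 c] by metis
    then show ?thesis unfolding lift_def by blast
  qed
  then obtain w where w: "\<And>c. 0 < c \<Longrightarrow> c < fst M \<Longrightarrow> lift c (w c)" by metis
  define w' where "w' c = (if c = 0 then w0 else w c)" for c
  show ?thesis
  proof (rule section_of_lifts[of w'])
    show "w' c \<in> carrier_vec (fst E)" "g *\<^sub>v w' c = unit_vec (fst M) c" if "c < fst M" for c
      using w[of c] w0 that unfolding w'_def lift_def by auto
    show "(\<exists>r<fst M. col (snd M b) c = unit_vec (fst M) r \<and> snd E b *\<^sub>v w' c = w' r) \<or>
        (col (snd M b) c = 0\<^sub>v (fst M) \<and> snd E b *\<^sub>v w' c = 0\<^sub>v (fst E))"
      if b: "b \<in> set (basisA Q)" and c: "c < fst M" for b c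
    proof (cases "c = 0")
      case True
      have "0 < fst M" using fst_M by simp
      then show ?thesis using True w0 b col_M_0 unfolding w'_def by (cases b) auto
    next
      case False
      then have "lift c (w c)" using w c by simp
      then show ?thesis using False b c col_M_Arr[of c] fst_M unfolding w'_def lift_def by (cases b) auto
    qed
  qed
qed

end

text \<open>The last two hypotheses say that Hom(M, S_j) = 0 for M = dual_mod Q (Vtx i # map Arr bs).\<close>
lemma Ext1_zero_dual_mod_Itil:
  assumes "quiver_wf Q" "i < nv Q" "j < nv Q"
    and "distinct bs" "set bs \<subseteq> set (in_arrows Q i)"
    and "\<And>a. a \<in> set bs \<Longrightarrow> src Q a \<noteq> j" "i \<noteq> j \<or> bs \<noteq> []"
  shows "Ext1_zero Q (dual_mod Q (Vtx i # map Arr bs) :: 'k::field amod) (Itil Q j)"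
proof (rule Ext1_zeroI[OF assms(1)])
  fix E f g assume "extension Q (Itil Q j :: 'k amod) E (dual_mod Q (Vtx i # map Arr bs)) f g"
  then interpret dual_Itil_extension Q "Itil Q j" E "dual_mod Q (Vtx i # map Arr bs)" f g j i bs
    using assms by unfold_locales (simp_all add: extension_def)
  show "\<exists>s. is_hom Q (dual_mod Q (Vtx i # map Arr bs)) E s
      \<and> g * s = 1\<^sub>m (fst (dual_mod Q (Vtx i # map Arr bs) :: 'k amod))"
    by (rule splits)
qed (simp_all add: Itil_dual_mod snd_dual_mod)

definition single_entry_mat :: "nat \<Rightarrow> nat \<Rightarrow> nat \<Rightarrow> nat \<Rightarrow> 'a::zero_neq_one mat" where
  "single_entry_mat p q r0 c0 = mat p q (\<lambda>(u, v). if u = r0 \<and> v = c0 then 1 else 0)"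

lemma dim_single_entry_mat [simp]:
  "dim_row (single_entry_mat p q r0 c0) = p" "dim_col (single_entry_mat p q r0 c0) = q"
  by (simp_all add: single_entry_mat_def)

lemma single_entry_mat_mult_index:
  fixes A :: "'a::semiring_1 mat"
  assumes "A \<in> carrier_mat q n" "x < p" "y < n" "c0 < q"
  shows "(single_entry_mat p q r0 c0 * A) $$ (x, y) = (if x = r0 then A $$ (c0, y) else 0)"
proof -
  have "(single_entry_mat p q r0 c0 * A) $$ (x, y)
      = (\<Sum>t\<in>{0..<q}. (if x = r0 \<and> t = c0 then 1 else 0) * A $$ (t, y))"
    using assms by (simp add: single_entry_mat_def scalar_prod_def)
  also have "\<dots> = (\<Sum>t\<in>{0..<q}. if t = c0 then (if x = r0 then A $$ (t, y) else 0) else 0)"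
    by (rule sum.cong) auto
  also have "\<dots> = (if x = r0 then A $$ (c0, y) else 0)" using assms(4) by (subst sum.delta) auto
  finally show ?thesis .
qed

lemma mult_single_entry_mat_index:
  fixes B :: "'a::semiring_1 mat"
  assumes "B \<in> carrier_mat n p" "x < n" "y < q" "r0 < p"
  shows "(B * single_entry_mat p q r0 c0) $$ (x, y) = (if y = c0 then B $$ (x, r0) else 0)"
proof -
  have "(B * single_entry_mat p q r0 c0) $$ (x, y)
      = (\<Sum>t\<in>{0..<p}. B $$ (x, t) * (if t = r0 \<and> y = c0 then 1 else 0))"
    using assms by (simp add: single_entry_mat_def scalar_prod_def)
  also have "\<dots> = (\<Sum>t\<in>{0..<p}. if t = r0 then (if y = c0 then B $$ (x, t) else 0) else 0)"
    by (rule sum.cong) auto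
  also have "\<dots> = (if y = c0 then B $$ (x, r0) else 0)" using assms(4) by (subst sum.delta) auto
  finally show ?thesis .
qed

lemma single_entry_mat_nonzero:
  "r0 < p \<Longrightarrow> c0 < q \<Longrightarrow> single_entry_mat p q r0 c0 \<noteq> (0\<^sub>m p q :: 'a::zero_neq_one mat)"
proof
  assume "r0 < p" "c0 < q" "single_entry_mat p q r0 c0 = (0\<^sub>m p q :: 'a mat)"
  then have "single_entry_mat p q r0 c0 $$ (r0, c0) = (0 :: 'a)" by simp
  with \<open>r0 < p\<close> \<open>c0 < q\<close> show False by (simp add: single_entry_mat_def)
qed

text \<open>An arrow a from j to i yields the map e_i \<mapsto> a from P~_i to P~_j.\<close>
lemma Ptil_hom_of_arrow:
  assumes i: "i < nv Q" and j: "j < nv Q" and a: "a \<in> set (out_arrows Q j)" "tgt Q a = i"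
  shows "\<exists>h. is_hom Q (Ptil Q i :: 'k::field amod) (Ptil Q j) h
    \<and> h \<noteq> 0\<^sub>m (length (Pbasis Q j)) (length (Pbasis Q i))"
proof -
  define L where "L = Pbasis Q i"
  define L' where "L' = Pbasis Q j"
  have L0: "L ! 0 = Vtx i" and pos: "0 < length L" unfolding L_def Pbasis_eq[OF i] by simp_all
  have Lv: "y < length L \<Longrightarrow> L ! y = Vtx i \<longleftrightarrow> y = 0" for y
    using nth_Vtx_Arr_eq_Vtx_iff[of y "out_arrows Q i" i i] unfolding L_def Pbasis_eq[OF i] by simp
  obtain k where "0 < k" "k < Suc (length (out_arrows Q j))" "(Vtx j # map Arr (out_arrows Q j)) ! k = Arr a"
    using a(1) by (rule nth_Vtx_Arr_index)
  then have k: "k < length L'" "L' ! k = Arr a" unfolding L'_def Pbasis_eq[OF j] by simp_all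
  have L'a: "x < length L' \<Longrightarrow> L' ! x = Arr a \<longleftrightarrow> x = k" for x
    using nth_eq_iff_index_eq[OF distinct_Pbasis[of Q j, folded L'_def] _ k(1)] k(2) by auto
  have mul_a: "mulB Q b (Arr a) = Some z \<longleftrightarrow> b = Vtx i \<and> z = Arr a" for b z
    using a by (cases b) (auto split: if_splits)
  define h :: "'k mat" where "h = single_entry_mat (length L') (length L) k 0"
  have "h * snd (Ptil Q i) b = snd (Ptil Q j) b * h" for b
  proof (rule eq_matI)
    fix x y assume "x < dim_row (snd (Ptil Q j) b * h)" "y < dim_col (snd (Ptil Q j) b * h)"
    then have x: "x < length L'" and y: "y < length L" unfolding h_def L_def L'_def by (simp_all add: snd_Ptil)
    have "(h * snd (Ptil Q i) b) $$ (x, y) = (if x = k then snd (Ptil Q i) b $$ (0, y) else 0)"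
      unfolding h_def by (rule single_entry_mat_mult_index) (use Ptil_carrier x y pos in \<open>simp_all add: L_def\<close>)
    also have "\<dots> = (if x = k \<and> b = Vtx i \<and> y = 0 then 1 else 0)"
    proof -
      have "mulB Q b (L ! y) = Some (Vtx i) \<longleftrightarrow> b = Vtx i \<and> y = 0"
        using Lv[OF y] by (auto simp: mulB_eq_Some_Vtx)
      then have e: "snd (Ptil Q i :: 'k amod) b $$ (0, y) = (if b = Vtx i \<and> y = 0 then 1 else 0)"
        using y pos L0 by (simp add: snd_Ptil L_def[symmetric])
      show ?thesis unfolding e by simp
    qed
    also have "\<dots> = (if y = 0 then snd (Ptil Q j) b $$ (x, k) else 0)"
    proof -
      have "mulB Q b (L' ! k) = Some (L' ! x) \<longleftrightarrow> b = Vtx i \<and> x = k"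
        using k(2) mul_a L'a[OF x] by auto
      then have e: "snd (Ptil Q j :: 'k amod) b $$ (x, k) = (if b = Vtx i \<and> x = k then 1 else 0)"
        using x k(1) by (simp add: snd_Ptil L'_def[symmetric])
      show ?thesis unfolding e by auto
    qed
    also have "\<dots> = (snd (Ptil Q j) b * h) $$ (x, y)"
      unfolding h_def by (rule mult_single_entry_mat_index[symmetric]) (use Ptil_carrier x y k in \<open>simp_all add: L'_def\<close>)
    finally show "(h * snd (Ptil Q i) b) $$ (x, y) = (snd (Ptil Q j) b * h) $$ (x, y)" .
  qed (simp_all add: h_def snd_Ptil L_def L'_def)
  moreover have "h \<noteq> 0\<^sub>m (length L') (length L)" unfolding h_def using k(1) pos by (rule single_entry_mat_nonzero)
  moreover have "h \<in> carrier_mat (length L') (length L)" unfolding h_def carrier_mat_def by simp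
  ultimately show ?thesis unfolding L_def L'_def is_hom_def by auto
qed

text \<open>An arrow a from j to i yields the map from I~_i to I~_j dual to e_j \<mapsto> a.\<close>
lemma Itil_hom_of_arrow:
  assumes i: "i < nv Q" and j: "j < nv Q" and a: "a \<in> set (in_arrows Q i)" "src Q a = j"
  shows "\<exists>h. is_hom Q (Itil Q i :: 'k::field amod) (Itil Q j) h
    \<and> h \<noteq> 0\<^sub>m (length (Ibasis Q j)) (length (Ibasis Q i))"
proof -
  define R where "R = Ibasis Q i"
  define R' where "R' = Ibasis Q j"
  have R'0: "R' ! 0 = Vtx j" and pos: "0 < length R'" unfolding R'_def Ibasis_eq[OF j] by simp_all
  have R'v: "x < length R' \<Longrightarrow> R' ! x = Vtx j \<longleftrightarrow> x = 0" for x
    using nth_Vtx_Arr_eq_Vtx_iff[of x "in_arrows Q j" j j] unfolding R'_def Ibasis_eq[OF j] by simp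
  obtain k where "0 < k" "k < Suc (length (in_arrows Q i))" "(Vtx i # map Arr (in_arrows Q i)) ! k = Arr a"
    using a(1) by (rule nth_Vtx_Arr_index)
  then have k: "k < length R" "R ! k = Arr a" unfolding R_def Ibasis_eq[OF i] by simp_all
  have Ra: "y < length R \<Longrightarrow> R ! y = Arr a \<longleftrightarrow> y = k" for y
    using nth_eq_iff_index_eq[OF distinct_Ibasis[of Q i, folded R_def] _ k(1)] k(2) by auto
  have mul_a: "mulB Q (Arr a) b = Some z \<longleftrightarrow> b = Vtx j \<and> z = Arr a" for b z
    using a by (cases b) (auto split: if_splits)
  define h :: "'k mat" where "h = single_entry_mat (length R') (length R) 0 k"
  have "h * snd (Itil Q i) b = snd (Itil Q j) b * h" for b
  proof (rule eq_matI)
    fix x y assume "x < dim_row (snd (Itil Q j) b * h)" "y < dim_col (snd (Itil Q j) b * h)"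
    then have x: "x < length R'" and y: "y < length R"
      unfolding h_def R_def R'_def by (simp_all add: Itil_dual_mod snd_dual_mod)
    have "(h * snd (Itil Q i) b) $$ (x, y) = (if x = 0 then snd (Itil Q i) b $$ (k, y) else 0)"
      unfolding h_def by (rule single_entry_mat_mult_index) (use Itil_carrier x y k in \<open>simp_all add: R_def\<close>)
    also have "\<dots> = (if x = 0 \<and> b = Vtx j \<and> y = k then 1 else 0)"
    proof -
      have iff: "mulB Q (R ! k) b = Some (R ! y) \<longleftrightarrow> b = Vtx j \<and> y = k"
        using k(2) mul_a Ra[OF y] by auto
      have "snd (Itil Q i :: 'k amod) b $$ (k, y) = (if mulB Q (R ! k) b = Some (R ! y) then 1 else 0)"
        using Itil_index[OF k(1)[unfolded R_def] y[unfolded R_def]] unfolding R_def .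
      then have e: "snd (Itil Q i :: 'k amod) b $$ (k, y) = (if b = Vtx j \<and> y = k then 1 else 0)"
        unfolding iff .
      show ?thesis unfolding e by simp
    qed
    also have "\<dots> = (if y = k then snd (Itil Q j) b $$ (x, 0) else 0)"
    proof -
      have iff: "mulB Q (R' ! x) b = Some (R' ! 0) \<longleftrightarrow> b = Vtx j \<and> x = 0"
        using R'0 R'v[OF x] by (auto simp: mulB_eq_Some_Vtx)
      have e: "snd (Itil Q j :: 'k amod) b $$ (x, 0) = (if b = Vtx j \<and> x = 0 then 1 else 0)"
        unfolding Itil_index[OF x[unfolded R'_def] pos[unfolded R'_def]] R'_def[symmetric] iff ..
      show ?thesis unfolding e by auto
    qed
    also have "\<dots> = (snd (Itil Q j) b * h) $$ (x, y)"
      unfolding h_def by (rule mult_single_entry_mat_index[symmetric]) (use Itil_carrier x y pos in \<open>simp_all add: R'_def\<close>)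
    finally show "(h * snd (Itil Q i) b) $$ (x, y) = (snd (Itil Q j) b * h) $$ (x, y)" .
  qed (simp_all add: h_def Itil_dual_mod snd_dual_mod R_def R'_def)
  moreover have "h \<noteq> 0\<^sub>m (length R') (length R)" unfolding h_def using pos k(1) by (rule single_entry_mat_nonzero)
  moreover have "h \<in> carrier_mat (length R') (length R)" unfolding h_def carrier_mat_def by simp
  ultimately show ?thesis unfolding R_def R'_def is_hom_def by auto
qed

lemma hom_from_simple_zero_Ptil:
  assumes j: "j < nv Q" and no_arrow: "\<And>a. a \<in> set (out_arrows Q j) \<Longrightarrow> tgt Q a \<noteq> i"
    and arrow_leaves_i: "i = j \<Longrightarrow> out_arrows Q i \<noteq> []"
  shows "hom_from_simple_zero Q i (Ptil Q j)"
  unfolding hom_from_simple_zero_def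
proof (intro ballI impI, elim conjE)
  define L where "L = Pbasis Q j"
  fix u assume u: "u \<in> carrier_vec (fst (Ptil Q j))" and ei: "snd (Ptil Q j) (Vtx i) *\<^sub>v u = u"
    and arrows: "\<forall>a<na Q. snd (Ptil Q j) (Arr a) *\<^sub>v u = 0\<^sub>v (fst (Ptil Q j))"
  have uc: "u \<in> carrier_vec (length L)" using u unfolding L_def by simp
  have L: "L = Vtx j # map Arr (out_arrows Q j)" unfolding L_def using Pbasis_eq[OF j] .
  have coord: "(snd (Ptil Q j) b *\<^sub>v u) $ r = (\<Sum>c<length L. if mulB Q b (L ! c) = Some (L ! r) then u $ c else 0)"
    if "r < length L" for b r
    unfolding snd_Ptil L_def[symmetric] using indicator_mat_mult_vec_index[OF uc that] .
  have "u $ r = 0" if r: "r < length L" for r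
  proof -
    from r have "r < Suc (length (out_arrows Q j))" unfolding L by simp
    then show ?thesis
    proof (cases rule: nth_Vtx_Arr_cases[where i = j])
      case 1
      show ?thesis
      proof (cases "i = j")
        case False
        have "(snd (Ptil Q j) (Vtx i) *\<^sub>v u) $ 0 = 0"
          unfolding coord[OF r[unfolded 1]] by (rule sum_if_never) (use False in \<open>auto simp: L mulB_eq_Some_Vtx\<close>)
        then show ?thesis using ei 1 by simp
      next
        case True
        then have "out_arrows Q j \<noteq> []" using arrow_leaves_i by simp
        define a where "a = hd (out_arrows Q j)"
        have a: "a \<in> set (out_arrows Q j)" unfolding a_def using \<open>out_arrows Q j \<noteq> []\<close> by (rule hd_in_set)
        then obtain k where "0 < k" "k < Suc (length (out_arrows Q j))"
          "(Vtx j # map Arr (out_arrows Q j)) ! k = Arr a" by (rule nth_Vtx_Arr_index)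
        then have k: "0 < k" "k < length L" "L ! k = Arr a" unfolding L by simp_all
        have "(snd (Ptil Q j) (Arr a) *\<^sub>v u) $ k = u $ 0"
          unfolding coord[OF k(2)] k(3)
          by (rule sum_if_unique) (use a r 1 nth_Vtx_Arr_eq_Vtx_iff[of _ "out_arrows Q j" j j] in \<open>auto simp: L mulB_eq_Some_Arr\<close>)
        then show ?thesis using arrows a k 1 by (simp add: L_def)
      qed
    next
      case (2 a)
      have "tgt Q a \<noteq> i" using no_arrow 2 by blast
      then have "(snd (Ptil Q j) (Vtx i) *\<^sub>v u) $ r = 0"
        unfolding coord[OF r] by (intro sum_if_never) (use 2 in \<open>auto simp: L mulB_eq_Some_Arr\<close>)
      then show ?thesis using ei by simp
    qed
  qed
  then show "u = 0\<^sub>v (fst (Ptil Q j))" using uc unfolding L_def by (intro eq_vecI) auto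
qed

lemma hom_from_simple_zero_simple_mod: "i \<noteq> j \<Longrightarrow> hom_from_simple_zero Q i (simple_mod Q j)"
  by (auto simp: hom_from_simple_zero_def simple_mod_def)

lemma Ptil_eq_simple_mod:
  assumes "i < nv Q" "out_arrows Q i = []"
  shows "Ptil Q i = simple_mod Q i"
proof -
  have "Pbasis Q i = [Vtx i]" using assms by (simp add: Pbasis_eq)
  then show ?thesis unfolding Ptil_def Let_def simple_mod_def
    by (auto intro!: ext eq_matI split: pbasis.split)
qed

lemma Itil_eq_simple_mod: "i < nv Q \<Longrightarrow> in_arrows Q i = [] \<Longrightarrow> Itil Q i = simple_mod Q i"
  by (simp add: Itil_dual_mod Ibasis_eq simple_mod_dual_mod)

lemma mod_iso_refl:
  assumes "\<And>b. snd M b \<in> carrier_mat (fst M) (fst M)"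
  shows "mod_iso Q M M"
proof -
  have "is_hom Q M M (1\<^sub>m (fst M))"
    unfolding is_hom_def using assms[THEN left_mult_one_mat] assms[THEN right_mult_one_mat] by simp
  then show ?thesis unfolding mod_iso_def by (intro exI[of _ "1\<^sub>m (fst M)"] conjI) simp_all
qed

lemma Ext1_zero_Ptil_brick_pair:
  assumes wf: "quiver_wf Q" and i: "i < nv Q" and j: "j < nv Q" and ij: "i \<noteq> j"
    and brick: "brick_pair Q (Ptil Q i :: 'k::field amod) (Ptil Q j)"
  shows "Ext1_zero Q (Ptil Q i :: 'k amod) (Ptil Q j)"
proof (rule Ext1_zero_Ptil[OF wf i Ptil_carrier hom_from_simple_zero_Ptil[OF j]])
  show "tgt Q a \<noteq> i" if "a \<in> set (out_arrows Q j)" for a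
    using Ptil_hom_of_arrow[OF i j that, where 'k = 'k] brick by (auto simp: brick_pair_def)
qed (use ij in simp)

lemma Ext1_zero_Ptil_self:
  assumes wf: "quiver_wf Q" and i: "i < nv Q"
    and not_simple: "\<not> mod_iso Q (Ptil Q i :: 'k::field amod) (simple_mod Q i)"
  shows "Ext1_zero Q (Ptil Q i :: 'k amod) (Ptil Q i)"
proof -
  have "out_arrows Q i \<noteq> []"
    using Ptil_eq_simple_mod[OF i] mod_iso_refl[OF simple_mod_carrier] not_simple by metis
  then show ?thesis
    by (intro Ext1_zero_Ptil[OF wf i Ptil_carrier hom_from_simple_zero_Ptil[OF i]]) (auto simp: is_loop_def)
qed

lemma Ext1_zero_Itil_brick_pair:
  assumes wf: "quiver_wf Q" and i: "i < nv Q" and j: "j < nv Q" and ij: "i \<noteq> j"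
    and brick: "brick_pair Q (Itil Q i :: 'k::field amod) (Itil Q j)"
  shows "Ext1_zero Q (Itil Q i :: 'k amod) (Itil Q j)"
proof -
  have "src Q a \<noteq> j" if "a \<in> set (in_arrows Q i)" for a
    using Itil_hom_of_arrow[OF i j that, where 'k = 'k] brick by (auto simp: brick_pair_def)
  then show ?thesis unfolding Itil_dual_mod[of Q i] Ibasis_eq[OF i]
    using Ext1_zero_dual_mod_Itil[OF wf i j distinct_in_arrows subset_refl] ij by blast
qed

lemma Ext1_zero_Itil_self:
  assumes wf: "quiver_wf Q" and i: "i < nv Q"
    and not_simple: "\<not> mod_iso Q (Itil Q i :: 'k::field amod) (simple_mod Q i)"
  shows "Ext1_zero Q (Itil Q i :: 'k amod) (Itil Q i)"
proof -
  have "in_arrows Q i \<noteq> []"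
    using Itil_eq_simple_mod[OF i] mod_iso_refl[OF simple_mod_carrier] not_simple by metis
  moreover have "src Q a \<noteq> i" if "a \<in> set (in_arrows Q i)" for a
    using that by (auto simp: is_loop_def)
  ultimately have "Ext1_zero Q (dual_mod Q (Vtx i # map Arr (in_arrows Q i)) :: 'k amod) (Itil Q i)"
    using Ext1_zero_dual_mod_Itil[OF wf i i distinct_in_arrows subset_refl] by blast
  then show ?thesis unfolding Itil_dual_mod[of Q i] Ibasis_eq[OF i] .
qed

theorem lemma2p2:
  fixes Q :: quiver and i j :: nat
    and K :: "'k::alg_closed_field itself"
  assumes "quiver_wf Q" and "i < nv Q" and "j < nv Q"
  shows
    "(i \<noteq> j \<longrightarrow> brick_pair Q (Ptil Q i :: 'k amod) (Ptil Q j) \<longrightarrow>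
        Ext1_zero Q (Ptil Q i :: 'k amod) (Ptil Q j)) \<and>
     (\<not> mod_iso Q (Ptil Q i :: 'k amod) (simple_mod Q i) \<longrightarrow>
        Ext1_zero Q (Ptil Q i :: 'k amod) (Ptil Q i)) \<and>
     (i \<noteq> j \<longrightarrow> brick_pair Q (Itil Q i :: 'k amod) (Itil Q j) \<longrightarrow>
        Ext1_zero Q (Itil Q i :: 'k amod) (Itil Q j)) \<and>
     (\<not> mod_iso Q (Itil Q i :: 'k amod) (simple_mod Q i) \<longrightarrow>
        Ext1_zero Q (Itil Q i :: 'k amod) (Itil Q i)) \<and>
     (i \<noteq> j \<longrightarrow> Ext1_zero Q (Ptil Q i :: 'k amod) (simple_mod Q j)) \<and>
     (i \<noteq> j \<longrightarrow> Ext1_zero Q (simple_mod Q i :: 'k amod) (Itil Q j))"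
proof (intro conjI impI)
  show "Ext1_zero Q (Ptil Q i :: 'k amod) (Ptil Q j)"
    if "i \<noteq> j" "brick_pair Q (Ptil Q i :: 'k amod) (Ptil Q j)"
    using Ext1_zero_Ptil_brick_pair[OF assms that] .
  show "Ext1_zero Q (Ptil Q i :: 'k amod) (Ptil Q i)" if "\<not> mod_iso Q (Ptil Q i :: 'k amod) (simple_mod Q i)"
    using Ext1_zero_Ptil_self[OF assms(1,2) that] .
  show "Ext1_zero Q (Itil Q i :: 'k amod) (Itil Q j)"
    if "i \<noteq> j" "brick_pair Q (Itil Q i :: 'k amod) (Itil Q j)"
    using Ext1_zero_Itil_brick_pair[OF assms that] .
  show "Ext1_zero Q (Itil Q i :: 'k amod) (Itil Q i)" if "\<not> mod_iso Q (Itil Q i :: 'k amod) (simple_mod Q i)"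
    using Ext1_zero_Itil_self[OF assms(1,2) that] .
  show "Ext1_zero Q (Ptil Q i :: 'k amod) (simple_mod Q j)" if "i \<noteq> j"
    using Ext1_zero_Ptil[OF assms(1,2) simple_mod_carrier hom_from_simple_zero_simple_mod[OF that]] .
  show "Ext1_zero Q (simple_mod Q i :: 'k amod) (Itil Q j)" if "i \<noteq> j"
    using Ext1_zero_dual_mod_Itil[OF assms, of "[]", where 'k = 'k] that by (simp add: simple_mod_dual_mod)
qed

end
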